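(* Let $\mathbf X=\mathbf Y+\boldsymbol\theta\in\mathbb{R}^d$ where $\mathbf Y$ is the $\mu$-mixture of random vectors $\mathbf Y_s$, $s\in\mathcal S$, each having mean zero, covariance $\sigma^2\mathrm{Id}$ (with $\sigma^2$ not depending on $s$) and independent components $Y_{s,1},\dots,Y_{s,d}$, where each $Y_{s,i}$ has a (univariate) Stein kernel $T_{s,i}$ with $\sup_{s\in\mathcal S,\,1\le i\le d}E[T_{s,i}^2]<\infty$ uniformly in $d$. Suppose $\mathbf g_0\in W^{1,2}(\nu)$ for the law $\nu$ of $\mathbf X$, and that there is a constant $C$ (independent of $s$ and $d$) such that $E_{\boldsymbol\theta}\big[(d/\|\mathbf X_s\|^2)^2\big]\le C$ for all $s\in\mathcal S$, where $\mathbf X_s=\mathbf Y_s+\boldsymbol\theta$. If $\lambda=\sigma^2(d-2)$ and $\|\boldsymbol\theta\|^2=O(d)$, then the shrinkage estimator $S_\lambda$ has strictly smaller risk than $S_0(\mathbf X)=\mathbf X$ for all sufficiently large $d$.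
   Context: Mixtures: $(\mathcal S,\mathcal A)$ is a measurable space, $\{m_s\}_{s\in\mathcal S}$ probability measures on $\mathbb{R}^d$ with $s\mapsto m_s(A)$ measurable for each Borel $A$, $\mu$ a probability measure on $\mathcal S$; the $\mu$-mixture is the law $A\mapsto\int m_s(A)\,\mu(ds)$, and $\mathbf Y$ is the $\mu$-mixture of $\mathbf Y_s\sim m_s$. A univariate Stein kernel for a mean zero real random variable $Y$ is a random variable $T$ with $E[Yf(Y)]=E[Tf'(Y)]$ for all absolutely continuous $f$ for which the expectations exist. $\mathbf g_0(\mathbf x)=\mathbf x/\|\mathbf x\|^2$, $W^{1,2}(\nu)$ the weighted Sobolev space of $\mathbf f$ with $\int\|\mathbf f\|^2d\nu+\int\|\nabla\mathbf f\|^2d\nu<\infty$. $S_\lambda(\mathbf x)=\mathbf x(1-\lambda/\|\mathbf x\|^2)$, risk $E_{\boldsymbol\theta}\|S(\mathbf X)-\boldsymbol\theta\|^2$. Asymptotics refer to a sequence of such problems indexed by $d$. *)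

theory Defs
  imports "HOL-Probability.Probability" "HOL-Library.Landau_Symbols"
begin

text \<open>Vectors of R^d are represented as functions nat => real, only the
  coordinates i < d being relevant; the Borel structure on R^d is the finite
  product measure over the index set {..<d}.\<close>

definition vec_space :: "nat \<Rightarrow> (nat \<Rightarrow> real) measure" where
  "vec_space d = PiM {..<d} (\<lambda>_. borel)"

definition sqnorm :: "nat \<Rightarrow> (nat \<Rightarrow> real) \<Rightarrow> real" where
  "sqnorm d x = (\<Sum>i<d. (x i)\<^sup>2)"

definition translate :: "nat \<Rightarrow> (nat \<Rightarrow> real) \<Rightarrow> (nat \<Rightarrow> real) \<Rightarrow> (nat \<Rightarrow> real)" where
  "translate d \<theta> y = restrict (\<lambda>i. y i + \<theta> i) {..<d}"

definition abs_cont_interval :: "(real \<Rightarrow> real) \<Rightarrow> real \<Rightarrow> real \<Rightarrow> bool" where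
  "abs_cont_interval f a b \<longleftrightarrow>
     (\<forall>\<epsilon>>0. \<exists>\<delta>>0. \<forall>(n::nat) (l::nat \<Rightarrow> real) u.
        (\<forall>k<n. a \<le> l k \<and> l k \<le> u k \<and> u k \<le> b) \<and>
        (\<forall>k<n. \<forall>k'<n. k \<noteq> k' \<longrightarrow> u k \<le> l k' \<or> u k' \<le> l k) \<and>
        (\<Sum>k<n. u k - l k) < \<delta>
        \<longrightarrow> (\<Sum>k<n. \<bar>f (u k) - f (l k)\<bar>) < \<epsilon>)"

definition abs_cont :: "(real \<Rightarrow> real) \<Rightarrow> bool" where
  "abs_cont f \<longleftrightarrow> (\<forall>a b. abs_cont_interval f a b)"

definition stein_kernel :: "'w measure \<Rightarrow> ('w \<Rightarrow> real) \<Rightarrow> ('w \<Rightarrow> real) \<Rightarrow> bool" where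
  "stein_kernel P Y T \<longleftrightarrow> T \<in> borel_measurable P \<and>
     (\<forall>f. abs_cont f \<and> integrable P (\<lambda>w. Y w * f (Y w))
           \<and> integrable P (\<lambda>w. T w * deriv f (Y w))
        \<longrightarrow> (\<integral>w. Y w * f (Y w) \<partial>P) = (\<integral>w. T w * deriv f (Y w) \<partial>P))"

definition mixture :: "'s measure \<Rightarrow> ('s \<Rightarrow> 'a measure) \<Rightarrow> 'a measure \<Rightarrow> 'a measure" where
  "mixture \<mu> m M = measure_of (space M) (sets M) (\<lambda>A. \<integral>\<^sup>+ s. emeasure (m s) A \<partial>\<mu>)"

definition obs_law :: "nat \<Rightarrow> 's measure \<Rightarrow> ('s \<Rightarrow> 'w measure) \<Rightarrow> ('s \<Rightarrow> 'w \<Rightarrow> nat \<Rightarrow> real)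
     \<Rightarrow> (nat \<Rightarrow> real) \<Rightarrow> (nat \<Rightarrow> real) measure" where
  "obs_law d \<mu> P Y \<theta> =
     distr (mixture \<mu> (\<lambda>s. distr (P s) (vec_space d) (Y s)) (vec_space d)) (vec_space d) (translate d \<theta>)"

definition g0 :: "nat \<Rightarrow> (nat \<Rightarrow> real) \<Rightarrow> (nat \<Rightarrow> real)" where
  "g0 d x = restrict (\<lambda>i. x i / sqnorm d x) {..<d}"

definition pdiff :: "((nat \<Rightarrow> real) \<Rightarrow> (nat \<Rightarrow> real)) \<Rightarrow> nat \<Rightarrow> nat \<Rightarrow> (nat \<Rightarrow> real) \<Rightarrow> real" where
  "pdiff g i j x = deriv (\<lambda>t. g (x(j := x j + t)) i) 0"

definition in_W12 :: "nat \<Rightarrow> (nat \<Rightarrow> real) measure \<Rightarrow> ((nat \<Rightarrow> real) \<Rightarrow> (nat \<Rightarrow> real)) \<Rightarrow> bool" where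
  "in_W12 d \<nu> g \<longleftrightarrow>
     (\<integral>\<^sup>+ x. ennreal (sqnorm d (g x)) \<partial>\<nu>) < \<infinity> \<and>
     (\<integral>\<^sup>+ x. ennreal (\<Sum>i<d. \<Sum>j<d. (pdiff g i j x)\<^sup>2) \<partial>\<nu>) < \<infinity>"

definition shrink :: "nat \<Rightarrow> real \<Rightarrow> (nat \<Rightarrow> real) \<Rightarrow> (nat \<Rightarrow> real)" where
  "shrink d lam x = restrict (\<lambda>i. x i * (1 - lam / sqnorm d x)) {..<d}"

text \<open>Risk E_theta ||S(X) - theta||^2 where X has law nu (as an extended
  nonnegative integral, so infinite risk is not silently truncated).\<close>

definition risk :: "nat \<Rightarrow> (nat \<Rightarrow> real) measure \<Rightarrow> (nat \<Rightarrow> real) \<Rightarrow> ((nat \<Rightarrow> real) \<Rightarrow> (nat \<Rightarrow> real)) \<Rightarrow> ennreal" where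
  "risk d \<nu> \<theta> S = (\<integral>\<^sup>+ x. ennreal (sqnorm d (\<lambda>i. S x i - \<theta> i)) \<partial>\<nu>)"

end

theory Submission
  imports Defs
begin

text \<open>Fix one mixture component and write X = Y + \<theta>. The loss of S_\<lambda> is
  |Y|^2 - 2 \<lambda> <Y, g0(X)> + \<lambda>^2 / |X|^2. Because the coordinates of Y are independent,
  E[Y_i g0_i(X)] can be computed by integrating out Y_i alone, and Stein's identity turns it
  into E[T_i \<partial>_i g0_i(X)] -- except where all other coordinates vanish, events which are
  disjoint up to a null set and so jointly negligible. Summing over i gives
  \<sigma>^2 (d - 2) E[1/|X|^2] plus a remainder of order 1/sqrt d: the centred kernels
  T_i - \<sigma>^2 are uncorrelated with variance at most B, and E[(d/|X|^2)^2] \<le> C.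
  With \<lambda> = \<sigma>^2 (d - 2) and Jensen's E[1/|X|^2] \<ge> 1/(d \<sigma>^2 + |\<theta>|^2), the risk is at
  most d \<sigma>^2 - \<lambda>^2/(d \<sigma>^2 + |\<theta>|^2) + O(\<lambda>/sqrt d), and the gain is of order d
  because |\<theta>|^2 = O(d). The bound is uniform in the component, hence holds for the mixture.\<close>

lemma lipschitz_imp_abs_cont:
  fixes f :: "real \<Rightarrow> real"
  assumes L: "\<And>x y. \<bar>f x - f y\<bar> \<le> L * \<bar>x - y\<bar>"
  shows "abs_cont f"
  unfolding abs_cont_def abs_cont_interval_def
proof (intro allI impI)
  fix a b \<epsilon> :: real assume \<epsilon>: "\<epsilon> > 0"
  have L0: "L \<ge> 0" using L[of 1 0] by simp
  show "\<exists>\<delta>>0. \<forall>(n::nat) l u.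
        (\<forall>k<n. a \<le> l k \<and> l k \<le> u k \<and> u k \<le> b) \<and>
        (\<forall>k<n. \<forall>k'<n. k \<noteq> k' \<longrightarrow> u k \<le> l k' \<or> u k' \<le> l k) \<and>
        (\<Sum>k<n. u k - l k) < \<delta>
        \<longrightarrow> (\<Sum>k<n. \<bar>f (u k) - f (l k)\<bar>) < \<epsilon>"
  proof (intro exI[of _ "\<epsilon> / (L + 1)"] conjI allI impI)
    show "\<epsilon> / (L + 1) > 0" using \<epsilon> L0 by simp
    fix n :: nat and l u :: "nat \<Rightarrow> real"
    assume H: "(\<forall>k<n. a \<le> l k \<and> l k \<le> u k \<and> u k \<le> b) \<and>
        (\<forall>k<n. \<forall>k'<n. k \<noteq> k' \<longrightarrow> u k \<le> l k' \<or> u k' \<le> l k) \<and>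
        (\<Sum>k<n. u k - l k) < \<epsilon> / (L + 1)"
    have "(\<Sum>k<n. \<bar>f (u k) - f (l k)\<bar>) \<le> (\<Sum>k<n. L * (u k - l k))"
      using H by (intro sum_mono) (metis L abs_of_nonneg diff_ge_0_iff_ge lessThan_iff)
    also have "\<dots> = L * (\<Sum>k<n. u k - l k)" by (simp add: sum_distrib_left)
    also have "\<dots> \<le> L * (\<epsilon> / (L + 1))" using H L0 by (intro mult_left_mono) auto
    also have "\<dots> < \<epsilon>" using L0 \<epsilon> by (simp add: field_simps)
    finally show "(\<Sum>k<n. \<bar>f (u k) - f (l k)\<bar>) < \<epsilon>" .
  qed
qed

lemma abs_mult_le_weighted_squares:
  fixes a u v :: real
  assumes "a > 0"
  shows "\<bar>u * v\<bar> \<le> (a * u\<^sup>2 + v\<^sup>2 / a) / 2"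
proof -
  have "0 \<le> (a * \<bar>u\<bar> - \<bar>v\<bar>)\<^sup>2" by simp
  hence "2 * a * \<bar>u * v\<bar> \<le> a\<^sup>2 * u\<^sup>2 + v\<^sup>2"
    by (simp add: power2_eq_square algebra_simps abs_mult)
  thus ?thesis using assms by (simp add: field_simps power2_eq_square)
qed

lemma sum_squares_le_square_sum:
  fixes f :: "nat \<Rightarrow> real"
  assumes "\<And>i. i \<in> A \<Longrightarrow> f i \<ge> 0"
  shows "(\<Sum>i\<in>A. (f i)\<^sup>2) \<le> (\<Sum>i\<in>A. f i)\<^sup>2"
  using assms
proof (induct A rule: infinite_finite_induct)
  case (insert a A)
  have "(\<Sum>i\<in>A. f i) \<ge> 0" "f a \<ge> 0" using insert by (auto intro: sum_nonneg)
  hence "(f a)\<^sup>2 + (\<Sum>i\<in>A. f i)\<^sup>2 \<le> (f a + (\<Sum>i\<in>A. f i))\<^sup>2"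
    by (simp add: power2_eq_square algebra_simps)
  thus ?case using insert by simp
qed auto

lemma integrable_mult_bounded:
  fixes f g :: "'a \<Rightarrow> real"
  assumes f: "integrable M f" and g: "g \<in> borel_measurable M" "\<And>x. \<bar>g x\<bar> \<le> 1"
  shows "integrable M (\<lambda>x. f x * g x)"
proof (rule Bochner_Integration.integrable_bound[OF f])
  show "AE x in M. norm (f x * g x) \<le> norm (f x)"
    using g(2) by (auto simp: abs_mult intro!: AE_I2 mult_left_le)
qed (use f g in measurable)

lemma abs_integral_le_integral:
  fixes f g :: "'a \<Rightarrow> real"
  assumes "integrable M f" "integrable M g" "\<And>x. \<bar>f x\<bar> \<le> g x"
  shows "\<bar>\<integral>x. f x \<partial>M\<bar> \<le> (\<integral>x. g x \<partial>M)"
proof -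
  have "\<bar>\<integral>x. f x \<partial>M\<bar> \<le> (\<integral>x. \<bar>f x\<bar> \<partial>M)" by (rule integral_abs_bound)
  also have "\<dots> \<le> (\<integral>x. g x \<partial>M)" using assms by (intro integral_mono) auto
  finally show ?thesis .
qed

lemma integrable_mult_square_integrable:
  fixes f g :: "'a \<Rightarrow> real"
  assumes [measurable]: "f \<in> borel_measurable M" "g \<in> borel_measurable M"
    and f2: "integrable M (\<lambda>x. (f x)\<^sup>2)" and g2: "integrable M (\<lambda>x. (g x)\<^sup>2)"
  shows "integrable M (\<lambda>x. f x * g x)"
proof (rule Bochner_Integration.integrable_bound[of _ "\<lambda>x. ((f x)\<^sup>2 + (g x)\<^sup>2) / 2"])
  have "\<bar>f x * g x\<bar> \<le> \<bar>((f x)\<^sup>2 + (g x)\<^sup>2) / 2\<bar>" for x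
    using abs_mult_le_weighted_squares[of 1 "f x" "g x"] by simp
  thus "AE x in M. norm (f x * g x) \<le> norm (((f x)\<^sup>2 + (g x)\<^sup>2) / 2)" by simp
qed (use f2 g2 in simp_all)

section \<open>Stein's identity for the components of g0\<close>

text \<open>Along the i-th coordinate line, the i-th component of g0 at y + \<theta> is
  g0_slice (\<theta> i) R (y i), where R is the squared norm of the other coordinates.\<close>

definition g0_slice :: "real \<Rightarrow> real \<Rightarrow> real \<Rightarrow> real" where
  "g0_slice c R u = (u + c) / ((u + c)\<^sup>2 + R)"

definition g0_slice_deriv :: "real \<Rightarrow> real \<Rightarrow> real \<Rightarrow> real" where
  "g0_slice_deriv c R u = (R - (u + c)\<^sup>2) / ((u + c)\<^sup>2 + R)\<^sup>2"

lemma has_real_derivative_g0_slice: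
  assumes "R > 0"
  shows "(g0_slice c R has_real_derivative g0_slice_deriv c R u) (at u)"
proof -
  have ne: "(u + c)\<^sup>2 + R \<noteq> 0" using assms by (metis add_nonneg_pos less_irrefl zero_le_power2)
  have "((\<lambda>u. (u + c) / ((u + c)\<^sup>2 + R)) has_real_derivative
     (1 * ((u + c)\<^sup>2 + R) - (u + c) * (2 * (u + c))) / (((u + c)\<^sup>2 + R) * ((u + c)\<^sup>2 + R))) (at u)"
    by (rule DERIV_divide) (auto intro!: derivative_eq_intros simp: ne)
  thus ?thesis unfolding g0_slice_def g0_slice_deriv_def
    by (simp add: power2_eq_square algebra_simps)
qed

lemma deriv_g0_slice: "R > 0 \<Longrightarrow> deriv (g0_slice c R) u = g0_slice_deriv c R u"
  using has_real_derivative_g0_slice DERIV_imp_deriv by blast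

lemma abs_g0_slice_le:
  assumes R: "R > 0"
  shows "\<bar>g0_slice c R u\<bar> \<le> 1 + 1 / R"
proof -
  define v where "v = u + c"
  have pos: "v\<^sup>2 + R > 0" using R by (simp add: add_nonneg_pos)
  have "\<bar>v\<bar> / (v\<^sup>2 + R) \<le> 1 + 1 / R"
  proof (cases "\<bar>v\<bar> \<ge> 1")
    case True
    hence "\<bar>v\<bar> * 1 \<le> \<bar>v\<bar> * \<bar>v\<bar>" by (intro mult_left_mono) auto
    hence "\<bar>v\<bar> \<le> v\<^sup>2" by (simp add: power2_eq_square)
    hence "\<bar>v\<bar> / (v\<^sup>2 + R) \<le> 1" using pos R by (simp add: divide_le_eq)
    then show ?thesis using R by (smt (verit) divide_pos_pos)
  next
    case False
    have "\<bar>v\<bar> / (v\<^sup>2 + R) \<le> 1 / (v\<^sup>2 + R)" using False pos by (intro divide_right_mono) auto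
    also have "\<dots> \<le> 1 / R" using R pos by (intro divide_left_mono) (auto intro: mult_pos_pos)
    finally show ?thesis by simp
  qed
  thus ?thesis unfolding g0_slice_def v_def[symmetric] using pos by (simp add: abs_div)
qed

lemma abs_g0_slice_deriv_le:
  assumes R: "R > 0"
  shows "\<bar>g0_slice_deriv c R u\<bar> \<le> 1 / R"
proof -
  define v where "v = u + c"
  have pos: "v\<^sup>2 + R > 0" using R by (simp add: add_nonneg_pos)
  have "\<bar>R - v\<^sup>2\<bar> / (v\<^sup>2 + R)\<^sup>2 \<le> (v\<^sup>2 + R) / (v\<^sup>2 + R)\<^sup>2"
    using pos R by (intro divide_right_mono) (auto simp: abs_le_iff)
  also have "\<dots> = 1 / (v\<^sup>2 + R)" using pos by (simp add: power2_eq_square)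
  also have "\<dots> \<le> 1 / R" using R pos by (intro divide_left_mono) (auto intro: mult_pos_pos)
  finally show ?thesis unfolding g0_slice_deriv_def v_def[symmetric] by (simp add: abs_div)
qed

lemma abs_cont_g0_slice:
  assumes R: "R > 0"
  shows "abs_cont (g0_slice c R)"
proof (rule lipschitz_imp_abs_cont)
  fix x y
  have "norm (g0_slice c R x - g0_slice c R y) \<le> (1 / R) * norm (x - y)"
    by (rule field_differentiable_bound[where S=UNIV and f'="g0_slice_deriv c R"])
       (use has_real_derivative_g0_slice[OF R] abs_g0_slice_deriv_le[OF R] in
         \<open>auto simp: has_field_derivative_at_within\<close>)
  thus "\<bar>g0_slice c R x - g0_slice c R y\<bar> \<le> (1 / R) * \<bar>x - y\<bar>" by simp
qed

lemma stein_kernel_g0_slice: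
  assumes st: "stein_kernel M Y T" and Y: "Y \<in> borel_measurable M" "integrable M Y"
    and T: "integrable M T" and R: "R > 0"
  shows "(\<integral>w. Y w * g0_slice c R (Y w) \<partial>M) = (\<integral>w. T w * g0_slice_deriv c R (Y w) \<partial>M)"
proof -
  have [measurable]: "T \<in> borel_measurable M" using st unfolding stein_kernel_def by blast
  have [measurable]: "g0_slice c R \<in> borel_measurable borel" "g0_slice_deriv c R \<in> borel_measurable borel"
    unfolding g0_slice_def g0_slice_deriv_def by measurable
  have "integrable M (\<lambda>w. Y w * g0_slice c R (Y w))"
  proof (rule Bochner_Integration.integrable_bound[of _ "\<lambda>w. (1 + 1/R) * Y w"])
    have "\<bar>Y w\<bar> * \<bar>g0_slice c R (Y w)\<bar> \<le> \<bar>Y w\<bar> * (1 + 1/R)" for w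
      using abs_g0_slice_le[OF R] by (intro mult_left_mono) auto
    thus "AE w in M. norm (Y w * g0_slice c R (Y w)) \<le> norm ((1 + 1/R) * Y w)"
      using R by (auto simp: abs_mult mult.commute)
  qed (use Y in \<open>simp_all, measurable\<close>)
  moreover have "integrable M (\<lambda>w. T w * deriv (g0_slice c R) (Y w))"
    unfolding deriv_g0_slice[OF R]
  proof (rule Bochner_Integration.integrable_bound[of _ "\<lambda>w. (1/R) * T w"])
    have "\<bar>T w\<bar> * \<bar>g0_slice_deriv c R (Y w)\<bar> \<le> \<bar>T w\<bar> * (1/R)" for w
      using abs_g0_slice_deriv_le[OF R] by (intro mult_left_mono) auto
    thus "AE w in M. norm (T w * g0_slice_deriv c R (Y w)) \<le> norm ((1/R) * T w)"
      using R by (auto simp: abs_mult)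
    show "integrable M (\<lambda>w. (1/R) * T w)" using T by simp
    show "(\<lambda>w. T w * g0_slice_deriv c R (Y w)) \<in> borel_measurable M" using Y by measurable
  qed
  ultimately have "(\<integral>w. Y w * g0_slice c R (Y w) \<partial>M) = (\<integral>w. T w * deriv (g0_slice c R) (Y w) \<partial>M)"
    using st abs_cont_g0_slice[OF R] unfolding stein_kernel_def by blast
  thus ?thesis unfolding deriv_g0_slice[OF R] .
qed

lemma stein_kernel_second_moment:
  assumes st: "stein_kernel M Y T"
    and Y2: "integrable M (\<lambda>w. Y w * Y w)" and T: "integrable M T"
  shows "(\<integral>w. Y w * Y w \<partial>M) = (\<integral>w. T w \<partial>M)"
proof -
  have "abs_cont (\<lambda>x::real. x)" by (rule lipschitz_imp_abs_cont[of _ 1]) simp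
  moreover have "integrable M (\<lambda>w. T w * deriv (\<lambda>x. x) (Y w))" using T by simp
  ultimately have "(\<integral>w. Y w * Y w \<partial>M) = (\<integral>w. T w * deriv (\<lambda>x. x) (Y w) \<partial>M)"
    using st Y2 unfolding stein_kernel_def by blast
  thus ?thesis by simp
qed

section \<open>Integrals on a product of copies of one probability space\<close>

locale product_copies =
  fixes M :: "'w measure" and I :: "nat set"
  assumes prob_space_M: "prob_space M" and finite_I: "finite I"
begin

abbreviation "\<Omega> \<equiv> PiM I (\<lambda>_. M)"

sublocale M: prob_space M by (rule prob_space_M)

sublocale \<Omega>: prob_space \<Omega> by (rule prob_space_PiM) (simp add: prob_space_M)

lemma integral_PiM_split_coordinate:
  fixes F :: "(nat \<Rightarrow> 'w) \<Rightarrow> real"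
  assumes i: "i \<in> I" and F: "integrable \<Omega> F"
  shows "integral\<^sup>L \<Omega> F = (\<integral>x. (\<integral>w. F (x(i:=w)) \<partial>M) \<partial>PiM (I - {i}) (\<lambda>_. M))"
proof -
  interpret product_sigma_finite "\<lambda>_. M"
    by (simp add: product_sigma_finite_def M.sigma_finite_measure_axioms)
  have "insert i (I - {i}) = I" using i by auto
  thus ?thesis using product_integral_insert[of "I - {i}" i F] F finite_I by simp
qed

lemma fun_upd_in_space_PiM:
  assumes "x \<in> space (PiM (I - {i}) (\<lambda>_. M))" "w \<in> space M" "i \<in> I"
  shows "x(i := w) \<in> space \<Omega>"
  using assms by (auto simp: space_PiM PiE_def extensional_def Pi_def split: if_splits)

lemma integral_mult_coordinate_indep:
  fixes g :: "'w \<Rightarrow> real" and h :: "(nat \<Rightarrow> 'w) \<Rightarrow> real"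
  assumes i: "i \<in> I"
    and h_upd: "\<And>x w. x \<in> space \<Omega> \<Longrightarrow> w \<in> space M \<Longrightarrow> h (x(i := w)) = h x"
    and int_gh: "integrable \<Omega> (\<lambda>x. g (x i) * h x)" and int_h: "integrable \<Omega> h"
  shows "(\<integral>x. g (x i) * h x \<partial>\<Omega>) = (\<integral>w. g w \<partial>M) * (\<integral>x. h x \<partial>\<Omega>)"
proof -
  let ?J = "PiM (I - {i}) (\<lambda>_. M)"
  have h_const: "h (x(i:=w)) = h (x(i:=v))"
    if "x \<in> space ?J" "w \<in> space M" "v \<in> space M" for x w v
    using h_upd[OF fun_upd_in_space_PiM[OF that(1,3) i] that(2)] by simp
  have "(\<integral>w. g w * h (x(i:=w)) \<partial>M) = (\<integral>w. g w \<partial>M) * (\<integral>w. h (x(i:=w)) \<partial>M)"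
    if x: "x \<in> space ?J" for x
  proof -
    obtain v where v: "v \<in> space M" using M.not_empty by blast
    have "(\<integral>w. g w * h (x(i:=w)) \<partial>M) = (\<integral>w. g w * h (x(i:=v)) \<partial>M)"
      by (rule Bochner_Integration.integral_cong) (use h_const[OF x _ v] in auto)
    moreover have "(\<integral>w. h (x(i:=w)) \<partial>M) = (\<integral>w. h (x(i:=v)) \<partial>M)"
      by (rule Bochner_Integration.integral_cong) (use h_const[OF x _ v] in auto)
    ultimately show ?thesis by (simp add: M.prob_space)
  qed
  hence "(\<integral>x. g (x i) * h x \<partial>\<Omega>) = (\<integral>w. g w \<partial>M) * (\<integral>x. (\<integral>w. h (x(i:=w)) \<partial>M) \<partial>?J)"
    using integral_PiM_split_coordinate[OF i int_gh] by (simp cong: Bochner_Integration.integral_cong)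
  also have "(\<integral>x. (\<integral>w. h (x(i:=w)) \<partial>M) \<partial>?J) = (\<integral>x. h x \<partial>\<Omega>)"
    using integral_PiM_split_coordinate[OF i int_h] by simp
  finally show ?thesis .
qed

lemma indep_vars_coordinates:
  assumes "I \<noteq> {}"
  shows "\<Omega>.indep_vars (\<lambda>_. M) (\<lambda>i x. x i) I"
proof -
  have "distr \<Omega> \<Omega> (\<lambda>x. \<lambda>i\<in>I. x i) = distr \<Omega> \<Omega> (\<lambda>x. x)"
    by (rule distr_cong) (auto simp: space_PiM PiE_def extensional_restrict)
  also have "\<dots> = PiM I (\<lambda>i. distr \<Omega> M (\<lambda>x. x i))"
    by (simp, rule PiM_cong) (use distr_PiM_component[of I "\<lambda>_. M", OF prob_space_M] in auto)
  finally show ?thesis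
    by (subst \<Omega>.indep_vars_iff_distr_eq_PiM'[OF assms]) auto
qed

lemma
  fixes g :: "'w \<Rightarrow> real"
  assumes i: "i \<in> I" and g: "g \<in> borel_measurable M"
  shows integrable_coordinate: "integrable \<Omega> (\<lambda>x. g (x i)) \<longleftrightarrow> integrable M g"
    and integral_coordinate: "(\<integral>x. g (x i) \<partial>\<Omega>) = (\<integral>w. g w \<partial>M)"
proof -
  have D: "distr \<Omega> M (\<lambda>x. x i) = M"
    using distr_PiM_component[of I "\<lambda>_. M", OF prob_space_M] i by simp
  have m: "(\<lambda>x. x i) \<in> measurable \<Omega> M" by (rule measurable_component_singleton) (use i in simp)
  show "integrable \<Omega> (\<lambda>x. g (x i)) \<longleftrightarrow> integrable M g"
    using integrable_distr_eq[OF m g] D by simp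
  show "(\<integral>x. g (x i) \<partial>\<Omega>) = (\<integral>w. g w \<partial>M)"
    using integral_distr[OF m g] D by simp
qed

end

section \<open>Risk of the shrinkage estimator for one mixture component\<close>

definition stein_error_const :: "real \<Rightarrow> real \<Rightarrow> real \<Rightarrow> real" where
  "stein_error_const B C \<sigma> = 4 * (max B 0 + max C 0) + \<sigma>\<^sup>2 + 1"

locale stein_component = product_copies M "{..<d}" for M :: "'w measure" and d :: nat +
  fixes Y :: "'w \<Rightarrow> nat \<Rightarrow> real" and T :: "nat \<Rightarrow> 'w \<Rightarrow> real" and \<theta> :: "nat \<Rightarrow> real"
    and \<sigma> B C :: real
  assumes Y_meas: "Y \<in> measurable M (vec_space d)"
    and mean_zero: "\<And>i. i < d \<Longrightarrow> integrable M (\<lambda>w. Y w i) \<and> (\<integral>w. Y w i \<partial>M) = 0"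
    and covariance: "\<And>i j. i < d \<Longrightarrow> j < d \<Longrightarrow>
           integrable M (\<lambda>w. Y w i * Y w j) \<and> (\<integral>w. Y w i * Y w j \<partial>M) = (if i = j then \<sigma>\<^sup>2 else 0)"
    and indep: "prob_space.indep_vars M (\<lambda>_. borel) (\<lambda>i w. Y w i) {..<d}"
    and stein: "\<And>i. i < d \<Longrightarrow> stein_kernel M (\<lambda>w. Y w i) (T i)"
    and stein_bound: "\<And>i. i < d \<Longrightarrow> (\<integral>\<^sup>+ w. ennreal ((T i w)\<^sup>2) \<partial>M) \<le> ennreal B"
    and inv_moment: "(\<integral>\<^sup>+ w. (ennreal (real d) / ennreal (sqnorm d (translate d \<theta> (Y w))))\<^sup>2 \<partial>M) \<le> ennreal C"
    and d_pos: "d > 0"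
begin

text \<open>Since ennreal maps negative reals to 0, the hypotheses only bound moments by max B 0
  and max C 0.\<close>

definition "B0 = max B 0"
definition "C0 = max C 0"

lemma B0_nonneg: "B0 \<ge> 0" and C0_nonneg: "C0 \<ge> 0"
  unfolding B0_def C0_def by simp_all

lemma Y_component_meas[measurable]: "i < d \<Longrightarrow> (\<lambda>w. Y w i) \<in> borel_measurable M"
  using Y_meas unfolding vec_space_def by measurable

lemma T_meas[measurable]: "i < d \<Longrightarrow> T i \<in> borel_measurable M"
  using stein unfolding stein_kernel_def by blast

lemma
  assumes i: "i < d"
  shows integrable_T_sq: "integrable M (\<lambda>w. (T i w)\<^sup>2)"
    and integral_T_sq_le: "(\<integral>w. (T i w)\<^sup>2 \<partial>M) \<le> B0"
proof -
  have "(\<integral>\<^sup>+ w. ennreal ((T i w)\<^sup>2) \<partial>M) < \<infinity>"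
    using stein_bound[OF i] by (simp add: order_le_less_trans)
  thus int: "integrable M (\<lambda>w. (T i w)\<^sup>2)" using i by (intro integrableI_nonneg) auto
  have "ennreal (\<integral>w. (T i w)\<^sup>2 \<partial>M) = (\<integral>\<^sup>+ w. ennreal ((T i w)\<^sup>2) \<partial>M)"
    using int by (intro nn_integral_eq_integral[symmetric]) auto
  also have "\<dots> \<le> ennreal B0" using stein_bound[OF i] unfolding B0_def by (simp add: order_trans ennreal_leI)
  finally show "(\<integral>w. (T i w)\<^sup>2 \<partial>M) \<le> B0" using B0_nonneg ennreal_le_iff by blast
qed

lemma integrable_T: "i < d \<Longrightarrow> integrable M (T i)"
  using M.square_integrable_imp_integrable[OF T_meas integrable_T_sq] by blast

lemma integrable_Y_sq: "i < d \<Longrightarrow> integrable M (\<lambda>w. (Y w i)\<^sup>2)"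
  and integral_Y_sq: "i < d \<Longrightarrow> (\<integral>w. (Y w i)\<^sup>2 \<partial>M) = \<sigma>\<^sup>2"
  using covariance[of i i] by (simp_all add: power2_eq_square)

lemma integral_T: "i < d \<Longrightarrow> (\<integral>w. T i w \<partial>M) = \<sigma>\<^sup>2"
  using stein_kernel_second_moment[OF stein covariance[THEN conjunct1] integrable_T] covariance[of i i]
  by simp

text \<open>Since the coordinates of Y are independent, Y has the same law as the vector
  whose i-th coordinate is Y_i evaluated at the i-th factor of the product of d copies
  of M. On that product, Fubini separates any one coordinate from the others.\<close>

definition "yvec x = (\<lambda>i\<in>{..<d}. Y (x i) i)"
definition "yc i x = Y (x i) i"
definition "tc i x = T i (x i)"
definition "xc i x = Y (x i) i + \<theta> i"
definition "nsq x = (\<Sum>j<d. (xc j x)\<^sup>2)"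
definition "nsq_off i x = (\<Sum>j\<in>{..<d}-{i}. (xc j x)\<^sup>2)"
definition "inv_nsq x = 1 / nsq x" \<comment> \<open>0 where nsq vanishes, a null set (AE_nsq_pos)\<close>

lemma yvec_meas[measurable]: "yvec \<in> measurable \<Omega> (vec_space d)"
  unfolding yvec_def vec_space_def by measurable
lemma yc_meas[measurable]: "i < d \<Longrightarrow> yc i \<in> borel_measurable \<Omega>"
  unfolding yc_def by measurable
lemma tc_meas[measurable]: "i < d \<Longrightarrow> tc i \<in> borel_measurable \<Omega>"
  unfolding tc_def by measurable
lemma xc_meas[measurable]: "i < d \<Longrightarrow> xc i \<in> borel_measurable \<Omega>"
  unfolding xc_def by measurable
lemma nsq_meas[measurable]: "nsq \<in> borel_measurable \<Omega>"
  unfolding nsq_def by measurable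
lemma nsq_off_meas[measurable]: "nsq_off i \<in> borel_measurable \<Omega>"
  unfolding nsq_off_def by measurable
lemma inv_nsq_meas[measurable]: "inv_nsq \<in> borel_measurable \<Omega>"
  unfolding inv_nsq_def by measurable

lemma distr_Y_eq_PiM: "distr M (vec_space d) Y = PiM {..<d} (\<lambda>i. distr M borel (\<lambda>w. Y w i))"
proof -
  have "distr M (vec_space d) Y = distr M (vec_space d) (\<lambda>w. \<lambda>i\<in>{..<d}. Y w i)"
  proof (rule distr_cong[OF refl refl])
    fix w assume "w \<in> space M"
    hence "Y w \<in> space (vec_space d)" using measurable_space[OF Y_meas] by blast
    thus "Y w = (\<lambda>i\<in>{..<d}. Y w i)"
      unfolding vec_space_def by (auto simp: space_PiM PiE_def extensional_restrict)
  qed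
  also have "\<dots> = PiM {..<d} (\<lambda>i. distr M borel (\<lambda>w. Y w i))"
    using M.indep_vars_iff_distr_eq_PiM'[where I="{..<d}" and M'="\<lambda>_. borel" and X="\<lambda>i w. Y w i"] indep d_pos
    unfolding vec_space_def by auto
  finally show ?thesis .
qed

lemma distr_yvec_eq_PiM: "distr \<Omega> (vec_space d) yvec = PiM {..<d} (\<lambda>i. distr M borel (\<lambda>w. Y w i))"
proof -
  have "\<Omega>.indep_vars (\<lambda>_. borel) (\<lambda>i x. Y (x i) i) {..<d}"
    by (rule \<Omega>.indep_vars_compose2[OF indep_vars_coordinates]) (use d_pos in auto)
  hence "distr \<Omega> (vec_space d) yvec = PiM {..<d} (\<lambda>i. distr \<Omega> borel (\<lambda>x. Y (x i) i))"
    using \<Omega>.indep_vars_iff_distr_eq_PiM'[where I="{..<d}" and M'="\<lambda>_. borel" and X="\<lambda>i x. Y (x i) i"] d_pos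
    unfolding vec_space_def yvec_def by auto
  also have "\<dots> = PiM {..<d} (\<lambda>i. distr M borel (\<lambda>w. Y w i))"
  proof (rule PiM_cong[OF refl])
    fix i assume i: "i \<in> {..<d}"
    have "distr \<Omega> borel (\<lambda>x. Y (x i) i) = distr (distr \<Omega> M (\<lambda>x. x i)) borel (\<lambda>w. Y w i)"
      using i by (subst distr_distr) (auto simp: comp_def)
    thus "distr \<Omega> borel (\<lambda>x. Y (x i) i) = distr M borel (\<lambda>w. Y w i)"
      using distr_PiM_component[of "{..<d}" "\<lambda>_. M", OF prob_space_M i] by simp
  qed
  finally show ?thesis .
qed

lemma nn_integral_Y_eq_yvec:
  assumes "F \<in> borel_measurable (vec_space d)"
  shows "(\<integral>\<^sup>+ w. F (Y w) \<partial>M) = (\<integral>\<^sup>+ x. F (yvec x) \<partial>\<Omega>)"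
proof -
  have "(\<integral>\<^sup>+ w. F (Y w) \<partial>M) = (\<integral>\<^sup>+ v. F v \<partial>distr M (vec_space d) Y)"
    using assms Y_meas by (simp add: nn_integral_distr)
  also have "\<dots> = (\<integral>\<^sup>+ x. F (yvec x) \<partial>\<Omega>)"
    using assms by (simp add: distr_Y_eq_PiM distr_yvec_eq_PiM[symmetric] nn_integral_distr)
  finally show ?thesis .
qed

lemma nsq_nonneg: "nsq x \<ge> 0"
  unfolding nsq_def by (simp add: sum_nonneg)

lemma inv_nsq_nonneg: "inv_nsq x \<ge> 0"
  unfolding inv_nsq_def using nsq_nonneg by simp

lemma sqnorm_translate_yvec: "sqnorm d (translate d \<theta> (yvec x)) = nsq x"
  unfolding sqnorm_def translate_def yvec_def nsq_def xc_def by simp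

lemma inv_moment_product: "(\<integral>\<^sup>+ x. (ennreal (real d) / ennreal (nsq x))\<^sup>2 \<partial>\<Omega>) \<le> ennreal C"
proof -
  have "(\<lambda>v. (ennreal (real d) / ennreal (sqnorm d (translate d \<theta> v)))\<^sup>2) \<in> borel_measurable (vec_space d)"
    unfolding sqnorm_def translate_def vec_space_def by simp
  from nn_integral_Y_eq_yvec[OF this] show ?thesis
    using inv_moment by (simp add: sqnorm_translate_yvec)
qed

lemma AE_nsq_pos: "AE x in \<Omega>. nsq x > 0"
proof -
  have "AE x in \<Omega>. (ennreal (real d) / ennreal (nsq x))\<^sup>2 \<noteq> \<infinity>"
    using inv_moment_product by (intro nn_integral_PInf_AE) (auto simp: top_unique)
  moreover have "(ennreal (real d) / ennreal (nsq x))\<^sup>2 = \<infinity>" if "\<not> nsq x > 0" for x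
  proof -
    have "nsq x = 0" using that nsq_nonneg[of x] by linarith
    thus ?thesis using d_pos by (simp add: divide_ennreal_def power2_eq_square ennreal_mult_top)
  qed
  ultimately show ?thesis by (auto elim: AE_mp)
qed

lemma
  shows integrable_inv_nsq_sq: "integrable \<Omega> (\<lambda>x. (inv_nsq x)\<^sup>2)"
    and integral_inv_nsq_sq_le: "(\<integral>x. (inv_nsq x)\<^sup>2 \<partial>\<Omega>) \<le> C0 / (real d)\<^sup>2"
proof -
  have "AE x in \<Omega>. (ennreal (real d) / ennreal (nsq x))\<^sup>2 = ennreal ((real d / nsq x)\<^sup>2)"
    using AE_nsq_pos by (rule AE_mp) (auto intro!: AE_I2 simp: divide_ennreal ennreal_power)
  hence le: "(\<integral>\<^sup>+ x. ennreal ((real d / nsq x)\<^sup>2) \<partial>\<Omega>) \<le> ennreal C"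
    using inv_moment_product nn_integral_cong_AE by fastforce
  have int: "integrable \<Omega> (\<lambda>x. (real d / nsq x)\<^sup>2)"
    using le by (intro integrableI_nonneg) (auto simp: order_le_less_trans)
  have "ennreal (\<integral>x. (real d / nsq x)\<^sup>2 \<partial>\<Omega>) = (\<integral>\<^sup>+ x. ennreal ((real d / nsq x)\<^sup>2) \<partial>\<Omega>)"
    using int by (intro nn_integral_eq_integral[symmetric]) auto
  also have "\<dots> \<le> ennreal C0" using le unfolding C0_def by (simp add: order_trans ennreal_leI)
  finally have le2: "(\<integral>x. (real d / nsq x)\<^sup>2 \<partial>\<Omega>) \<le> C0"
    using C0_nonneg ennreal_le_iff by blast
  have eq: "(\<lambda>x. (inv_nsq x)\<^sup>2) = (\<lambda>x. (1 / (real d)\<^sup>2) * (real d / nsq x)\<^sup>2)"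
    using d_pos by (auto simp: inv_nsq_def power_divide)
  show "integrable \<Omega> (\<lambda>x. (inv_nsq x)\<^sup>2)" unfolding eq using int by simp
  show "(\<integral>x. (inv_nsq x)\<^sup>2 \<partial>\<Omega>) \<le> C0 / (real d)\<^sup>2"
    unfolding eq using le2 by (simp add: divide_right_mono)
qed

lemma
  shows integrable_inv_nsq: "integrable \<Omega> inv_nsq"
    and integral_inv_nsq_le: "(\<integral>x. inv_nsq x \<partial>\<Omega>) \<le> (1 + C0) / (2 * real d)"
proof -
  define b where "b x = (1 / real d + real d * (inv_nsq x)\<^sup>2) / 2" for x
  have b: "inv_nsq x \<le> b x" for x
    using abs_mult_le_weighted_squares[of "1 / real d" 1 "inv_nsq x"] d_pos inv_nsq_nonneg[of x]
    by (simp add: b_def field_simps)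
  have int_b: "integrable \<Omega> b" unfolding b_def using integrable_inv_nsq_sq by simp
  show int: "integrable \<Omega> inv_nsq"
    by (rule Bochner_Integration.integrable_bound[OF int_b])
       (use order_trans[OF b abs_ge_self] inv_nsq_nonneg in \<open>auto intro!: AE_I2\<close>)
  have "(\<integral>x. inv_nsq x \<partial>\<Omega>) \<le> (\<integral>x. b x \<partial>\<Omega>)" using int int_b b by (rule integral_mono)
  also have "\<dots> = (1 / real d + real d * (\<integral>x. (inv_nsq x)\<^sup>2 \<partial>\<Omega>)) / 2"
    unfolding b_def using integrable_inv_nsq_sq \<Omega>.prob_space by simp
  also have "\<dots> \<le> (1 / real d + real d * (C0 / (real d)\<^sup>2)) / 2"
    using integral_inv_nsq_sq_le d_pos by (intro divide_right_mono add_left_mono mult_left_mono) auto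
  also have "\<dots> = (1 + C0) / (2 * real d)" using d_pos by (simp add: field_simps power2_eq_square)
  finally show "(\<integral>x. inv_nsq x \<partial>\<Omega>) \<le> (1 + C0) / (2 * real d)" .
qed

lemma
  assumes i: "i < d"
  shows integrable_yc: "integrable \<Omega> (yc i)" and integral_yc: "(\<integral>x. yc i x \<partial>\<Omega>) = 0"
    and integrable_yc_sq: "integrable \<Omega> (\<lambda>x. (yc i x)\<^sup>2)"
    and integral_yc_sq: "(\<integral>x. (yc i x)\<^sup>2 \<partial>\<Omega>) = \<sigma>\<^sup>2"
    and integrable_tc: "integrable \<Omega> (tc i)" and integral_tc: "(\<integral>x. tc i x \<partial>\<Omega>) = \<sigma>\<^sup>2"
    and integrable_tc_sq: "integrable \<Omega> (\<lambda>x. (tc i x)\<^sup>2)"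
    and integral_tc_sq_le: "(\<integral>x. (tc i x)\<^sup>2 \<partial>\<Omega>) \<le> B0"
proof -
  have i': "i \<in> {..<d}" using i by simp
  note int = integrable_coordinate[OF i'] and eq = integral_coordinate[OF i']
  show "integrable \<Omega> (yc i)" "(\<integral>x. yc i x \<partial>\<Omega>) = 0"
    using int[of "\<lambda>w. Y w i"] eq[of "\<lambda>w. Y w i"] mean_zero[OF i] i unfolding yc_def by auto
  show "integrable \<Omega> (\<lambda>x. (yc i x)\<^sup>2)" "(\<integral>x. (yc i x)\<^sup>2 \<partial>\<Omega>) = \<sigma>\<^sup>2"
    using int[of "\<lambda>w. (Y w i)\<^sup>2"] eq[of "\<lambda>w. (Y w i)\<^sup>2"] integrable_Y_sq[OF i] integral_Y_sq[OF i] i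
    unfolding yc_def by auto
  show "integrable \<Omega> (tc i)" "(\<integral>x. tc i x \<partial>\<Omega>) = \<sigma>\<^sup>2"
    using int[of "T i"] eq[of "T i"] integrable_T[OF i] integral_T[OF i] i unfolding tc_def by auto
  show "integrable \<Omega> (\<lambda>x. (tc i x)\<^sup>2)" "(\<integral>x. (tc i x)\<^sup>2 \<partial>\<Omega>) \<le> B0"
    using int[of "\<lambda>w. (T i w)\<^sup>2"] eq[of "\<lambda>w. (T i w)\<^sup>2"] integrable_T_sq[OF i] integral_T_sq_le[OF i] i
    unfolding tc_def by auto
qed

lemma nsq_eq_xc_sq_plus_nsq_off: "i < d \<Longrightarrow> nsq x = (xc i x)\<^sup>2 + nsq_off i x"
  unfolding nsq_def nsq_off_def by (subst sum.remove[of _ i]) auto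

lemma nsq_off_nonneg: "nsq_off i x \<ge> 0"
  unfolding nsq_off_def by (simp add: sum_nonneg)

lemma xc_sq_le_nsq: "i < d \<Longrightarrow> (xc i x)\<^sup>2 \<le> nsq x"
  by (simp add: nsq_eq_xc_sq_plus_nsq_off nsq_off_nonneg)

lemma nsq_mult_inv_nsq_sq: "nsq x * (inv_nsq x)\<^sup>2 = inv_nsq x"
  by (cases "nsq x = 0") (auto simp: inv_nsq_def power2_eq_square)

lemma xc_sq_inv_nsq_sq_le: "i < d \<Longrightarrow> (xc i x)\<^sup>2 * (inv_nsq x)\<^sup>2 \<le> inv_nsq x"
  using mult_right_mono[OF xc_sq_le_nsq[of i x], of "(inv_nsq x)\<^sup>2"] by (simp add: nsq_mult_inv_nsq_sq)

lemma sum_xc_sq_inv_nsq_sq: "(\<Sum>i<d. (xc i x)\<^sup>2 * (inv_nsq x)\<^sup>2) = inv_nsq x"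
proof -
  have "(\<Sum>i<d. (xc i x)\<^sup>2 * (inv_nsq x)\<^sup>2) = nsq x * (inv_nsq x)\<^sup>2"
    unfolding nsq_def by (simp add: sum_distrib_right)
  thus ?thesis by (simp add: nsq_mult_inv_nsq_sq)
qed

lemma coordinate_fun_upd:
  assumes i: "i < d"
  shows "yc i (x(i:=w)) = Y w i" "tc i (x(i:=w)) = T i w" "xc i (x(i:=w)) = Y w i + \<theta> i"
    "nsq_off i (x(i:=w)) = nsq_off i x" "nsq (x(i:=w)) = (Y w i + \<theta> i)\<^sup>2 + nsq_off i x"
proof -
  show "yc i (x(i:=w)) = Y w i" "tc i (x(i:=w)) = T i w" "xc i (x(i:=w)) = Y w i + \<theta> i"
    by (simp_all add: yc_def tc_def xc_def)
  show off: "nsq_off i (x(i:=w)) = nsq_off i x" unfolding nsq_off_def by (rule sum.cong) (auto simp: xc_def)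
  show "nsq (x(i:=w)) = (Y w i + \<theta> i)\<^sup>2 + nsq_off i x"
    using nsq_eq_xc_sq_plus_nsq_off[OF i, of "x(i:=w)"] off by (simp add: xc_def)
qed

text \<open>Where all coordinates but the i-th vanish, the slice of g0 through x is the
  singular function 1/u, so Stein's identity is not available; these events are
  disjoint up to a null set, which keeps their total contribution small.\<close>

definition "degen i x = (if nsq_off i x = 0 then 1 else 0 :: real)"

text \<open>The derivative of the i-th component of g0 in the i-th direction.\<close>

definition "dg0 i x = inv_nsq x - 2 * (xc i x)\<^sup>2 * (inv_nsq x)\<^sup>2"

lemma degen_meas[measurable]: "degen i \<in> borel_measurable \<Omega>"
  unfolding degen_def by measurable

lemma dg0_meas[measurable]: "i < d \<Longrightarrow> dg0 i \<in> borel_measurable \<Omega>"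
  unfolding dg0_def by measurable

lemma degen_cases: "degen i x = 0 \<or> degen i x = 1"
  unfolding degen_def by auto

lemma degen_nonneg: "degen i x \<ge> 0" and abs_degen_le: "\<bar>degen i x\<bar> \<le> 1"
  and abs_one_minus_degen_le: "\<bar>1 - degen i x\<bar> \<le> 1"
  using degen_cases[of i x] by auto

lemma degen_fun_upd: "i < d \<Longrightarrow> degen i (x(i:=w)) = degen i x"
  unfolding degen_def by (simp add: coordinate_fun_upd)

lemma abs_dg0_le: "i < d \<Longrightarrow> \<bar>dg0 i x\<bar> \<le> 3 * inv_nsq x"
  using xc_sq_inv_nsq_sq_le[of i x] inv_nsq_nonneg[of x] zero_le_power2[of "xc i x * inv_nsq x"]
  unfolding dg0_def abs_le_iff power_mult_distrib by linarith

lemma abs_yc_xc_inv_nsq_le: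
  assumes i: "i < d" and a: "a > 0"
  shows "\<bar>yc i x * (xc i x * inv_nsq x)\<bar> \<le> (a * (yc i x)\<^sup>2 + inv_nsq x / a) / 2"
proof -
  have "\<bar>yc i x * (xc i x * inv_nsq x)\<bar> \<le> (a * (yc i x)\<^sup>2 + (xc i x * inv_nsq x)\<^sup>2 / a) / 2"
    by (rule abs_mult_le_weighted_squares[OF a])
  also have "\<dots> \<le> (a * (yc i x)\<^sup>2 + inv_nsq x / a) / 2"
    using xc_sq_inv_nsq_sq_le[OF i, of x] a
    by (intro divide_right_mono add_left_mono) (auto simp: power_mult_distrib)
  finally show ?thesis .
qed

lemma abs_tc_dg0_le:
  assumes i: "i < d" and a: "a > 0"
  shows "\<bar>tc i x * dg0 i x\<bar> \<le> 3 * ((a * (tc i x)\<^sup>2 + (inv_nsq x)\<^sup>2 / a) / 2)"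
proof -
  have "\<bar>tc i x * dg0 i x\<bar> \<le> 3 * \<bar>tc i x * inv_nsq x\<bar>"
    using mult_left_mono[OF abs_dg0_le[OF i, of x], of "\<bar>tc i x\<bar>"] inv_nsq_nonneg[of x]
    by (simp add: abs_mult)
  also have "\<dots> \<le> 3 * ((a * (tc i x)\<^sup>2 + (inv_nsq x)\<^sup>2 / a) / 2)"
    by (rule mult_left_mono[OF abs_mult_le_weighted_squares[OF a]]) simp
  finally show ?thesis .
qed

lemma integrable_yc_xc_inv_nsq: "i < d \<Longrightarrow> integrable \<Omega> (\<lambda>x. yc i x * (xc i x * inv_nsq x))"
  by (rule Bochner_Integration.integrable_bound[of _ "\<lambda>x. ((yc i x)\<^sup>2 + inv_nsq x) / 2"])
     (use abs_yc_xc_inv_nsq_le[of _ 1] inv_nsq_nonneg integrable_yc_sq integrable_inv_nsq in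
       \<open>auto intro!: AE_I2\<close>)

lemma integrable_tc_dg0: "i < d \<Longrightarrow> integrable \<Omega> (\<lambda>x. tc i x * dg0 i x)"
  by (rule Bochner_Integration.integrable_bound[of _ "\<lambda>x. 3 * (((tc i x)\<^sup>2 + (inv_nsq x)\<^sup>2) / 2)"])
     (use abs_tc_dg0_le[of _ 1] integrable_tc_sq integrable_inv_nsq_sq in \<open>auto intro!: AE_I2\<close>)

lemma
  assumes i: "i < d" and R: "nsq_off i x > 0"
  shows yc_xc_inv_nsq_fun_upd: "yc i (x(i:=w)) * (xc i (x(i:=w)) * inv_nsq (x(i:=w)))
      = Y w i * g0_slice (\<theta> i) (nsq_off i x) (Y w i)"
    and tc_dg0_fun_upd: "tc i (x(i:=w)) * dg0 i (x(i:=w))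
      = T i w * g0_slice_deriv (\<theta> i) (nsq_off i x) (Y w i)"
proof -
  show "yc i (x(i:=w)) * (xc i (x(i:=w)) * inv_nsq (x(i:=w)))
      = Y w i * g0_slice (\<theta> i) (nsq_off i x) (Y w i)"
    by (simp add: coordinate_fun_upd[OF i] inv_nsq_def g0_slice_def)
  define v where "v = Y w i + \<theta> i"
  have combine: "1 / q - 2 * a * (1 / q)\<^sup>2 = (q - 2 * a) / q\<^sup>2" if "q \<noteq> 0" for q a :: real
    using that by (simp add: field_simps power2_eq_square)
  have "v\<^sup>2 + nsq_off i x \<noteq> 0" using R by (metis add_nonneg_pos less_irrefl zero_le_power2)
  from combine[OF this, of "v\<^sup>2"]
  have "1 / (v\<^sup>2 + nsq_off i x) - 2 * v\<^sup>2 * (1 / (v\<^sup>2 + nsq_off i x))\<^sup>2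
      = (nsq_off i x - v\<^sup>2) / (v\<^sup>2 + nsq_off i x)\<^sup>2" by simp
  thus "tc i (x(i:=w)) * dg0 i (x(i:=w)) = T i w * g0_slice_deriv (\<theta> i) (nsq_off i x) (Y w i)"
    by (simp add: coordinate_fun_upd[OF i] dg0_def inv_nsq_def g0_slice_deriv_def v_def)
qed

lemma integral_stein_nondegen:
  assumes i: "i < d"
  shows "(\<integral>x. yc i x * (xc i x * inv_nsq x) * (1 - degen i x) \<partial>\<Omega>)
       = (\<integral>x. tc i x * dg0 i x * (1 - degen i x) \<partial>\<Omega>)"
proof -
  have i': "i \<in> {..<d}" using i by simp
  have inner: "(\<integral>w. yc i (x(i:=w)) * (xc i (x(i:=w)) * inv_nsq (x(i:=w))) * (1 - degen i (x(i:=w))) \<partial>M)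
      = (\<integral>w. tc i (x(i:=w)) * dg0 i (x(i:=w)) * (1 - degen i (x(i:=w))) \<partial>M)" for x
  proof (cases "nsq_off i x = 0")
    case True
    thus ?thesis by (simp add: degen_def coordinate_fun_upd[OF i])
  next
    case False
    hence R: "nsq_off i x > 0" using nsq_off_nonneg[of i x] by linarith
    have "degen i (x(i:=w)) = 0" for w using False by (simp add: degen_def coordinate_fun_upd[OF i])
    thus ?thesis
      using stein_kernel_g0_slice[OF stein[OF i] Y_component_meas[OF i] _ integrable_T[OF i] R]
        mean_zero[OF i] by (simp add: yc_xc_inv_nsq_fun_upd[OF i R] tc_dg0_fun_upd[OF i R])
  qed
  have "integrable \<Omega> (\<lambda>x. yc i x * (xc i x * inv_nsq x) * (1 - degen i x))"
    "integrable \<Omega> (\<lambda>x. tc i x * dg0 i x * (1 - degen i x))"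
    by (intro integrable_mult_bounded[OF integrable_yc_xc_inv_nsq[OF i]]
        integrable_mult_bounded[OF integrable_tc_dg0[OF i]] abs_one_minus_degen_le, measurable)+
  from this[THEN integral_PiM_split_coordinate[OF i']] show ?thesis
    unfolding inner by simp
qed

lemma sum_degen_le_one:
  assumes pos: "nsq x > 0"
  shows "(\<Sum>i<d. degen i x) \<le> 1"
proof -
  have "(\<Sum>i<d. degen i x) * nsq x = (\<Sum>i<d. degen i x * nsq x)"
    by (simp add: sum_distrib_right)
  also have "\<dots> = (\<Sum>i<d. degen i x * (xc i x)\<^sup>2)"
    by (rule sum.cong) (use nsq_eq_xc_sq_plus_nsq_off in \<open>auto simp: degen_def\<close>)
  also have "\<dots> \<le> (\<Sum>i<d. (xc i x)\<^sup>2)"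
    by (intro sum_mono) (use degen_cases in \<open>auto simp: degen_def\<close>)
  also have "\<dots> = 1 * nsq x" unfolding nsq_def by simp
  finally show ?thesis using pos by (simp add: mult_le_cancel_right)
qed

lemma integrable_degen: "integrable \<Omega> (degen i)"
  by (rule Bochner_Integration.integrable_bound[of _ "\<lambda>_. 1::real"]) (auto simp: abs_degen_le)

lemma sum_integral_mult_degen_le:
  assumes f: "integrable \<Omega> f" "\<And>x. f x \<ge> 0"
  shows "(\<Sum>i<d. \<integral>x. f x * degen i x \<partial>\<Omega>) \<le> (\<integral>x. f x \<partial>\<Omega>)"
proof -
  have int: "integrable \<Omega> (\<lambda>x. f x * degen i x)" for i
    by (intro integrable_mult_bounded[OF f(1)] abs_degen_le) measurable
  hence "(\<Sum>i<d. \<integral>x. f x * degen i x \<partial>\<Omega>) = (\<integral>x. f x * (\<Sum>i<d. degen i x) \<partial>\<Omega>)"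
    by (simp add: sum_distrib_left)
  also have "\<dots> \<le> (\<integral>x. f x \<partial>\<Omega>)"
  proof (rule integral_mono_AE)
    show "integrable \<Omega> (\<lambda>x. f x * (\<Sum>i<d. degen i x))"
      using int by (simp add: sum_distrib_left)
    show "AE x in \<Omega>. f x * (\<Sum>i<d. degen i x) \<le> f x"
      using AE_nsq_pos by (rule AE_mp) (auto intro!: AE_I2 mult_left_le sum_degen_le_one f(2))
  qed (rule f(1))
  finally show ?thesis .
qed

lemma sum_integral_degen_le_one: "(\<Sum>i<d. \<integral>x. degen i x \<partial>\<Omega>) \<le> 1"
  using sum_integral_mult_degen_le[of "\<lambda>_. 1"] by (simp add: \<Omega>.prob_space)

lemma integral_coordinate_mult_degen:
  assumes i: "i < d" and g: "g \<in> borel_measurable M" "integrable M (\<lambda>w. (g w)\<^sup>2)"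
  shows "(\<integral>x. (g (x i))\<^sup>2 * degen i x \<partial>\<Omega>) = (\<integral>w. (g w)\<^sup>2 \<partial>M) * (\<integral>x. degen i x \<partial>\<Omega>)"
proof (rule integral_mult_coordinate_indep)
  have "integrable \<Omega> (\<lambda>x. (g (x i))\<^sup>2)"
    using integrable_coordinate[of i "\<lambda>w. (g w)\<^sup>2"] i g by simp
  thus "integrable \<Omega> (\<lambda>x. (g (x i))\<^sup>2 * degen i x)"
    by (intro integrable_mult_bounded abs_degen_le) measurable
qed (use i degen_fun_upd integrable_degen in auto)

lemma sum_integral_tc_sq_degen_le: "(\<Sum>i<d. \<integral>x. (tc i x)\<^sup>2 * degen i x \<partial>\<Omega>) \<le> B0"
proof -
  have "(\<Sum>i<d. \<integral>x. (tc i x)\<^sup>2 * degen i x \<partial>\<Omega>) \<le> (\<Sum>i<d. B0 * (\<integral>x. degen i x \<partial>\<Omega>))"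
  proof (rule sum_mono)
    fix i assume "i \<in> {..<d}"
    hence i: "i < d" by simp
    show "(\<integral>x. (tc i x)\<^sup>2 * degen i x \<partial>\<Omega>) \<le> B0 * (\<integral>x. degen i x \<partial>\<Omega>)"
      using integral_coordinate_mult_degen[OF i T_meas[OF i] integrable_T_sq[OF i]]
        integral_T_sq_le[OF i] degen_nonneg
      unfolding tc_def by (simp add: mult_right_mono)
  qed
  also have "\<dots> = B0 * (\<Sum>i<d. \<integral>x. degen i x \<partial>\<Omega>)"
    by (simp add: sum_distrib_left)
  also have "\<dots> \<le> B0 * 1"
    by (rule mult_left_mono[OF sum_integral_degen_le_one B0_nonneg])
  finally show ?thesis by simp
qed

lemma sum_integral_yc_sq_degen_le: "(\<Sum>i<d. \<integral>x. (yc i x)\<^sup>2 * degen i x \<partial>\<Omega>) \<le> \<sigma>\<^sup>2"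
proof -
  have "(\<integral>x. (yc i x)\<^sup>2 * degen i x \<partial>\<Omega>) = \<sigma>\<^sup>2 * (\<integral>x. degen i x \<partial>\<Omega>)" if i: "i < d" for i
    using integral_coordinate_mult_degen[OF i Y_component_meas[OF i] integrable_Y_sq[OF i]]
      integral_Y_sq[OF i]
    unfolding yc_def by simp
  hence "(\<Sum>i<d. \<integral>x. (yc i x)\<^sup>2 * degen i x \<partial>\<Omega>) = (\<Sum>i<d. \<sigma>\<^sup>2 * (\<integral>x. degen i x \<partial>\<Omega>))"
    by (intro sum.cong) auto
  also have "\<dots> = \<sigma>\<^sup>2 * (\<Sum>i<d. \<integral>x. degen i x \<partial>\<Omega>)"
    by (simp add: sum_distrib_left)
  also have "\<dots> \<le> \<sigma>\<^sup>2 * 1"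
    by (rule mult_left_mono[OF sum_integral_degen_le_one]) simp
  finally show ?thesis by simp
qed

definition "defect_T = (\<Sum>i<d. \<integral>x. tc i x * dg0 i x * degen i x \<partial>\<Omega>)"
definition "defect_Y = (\<Sum>i<d. \<integral>x. yc i x * (xc i x * inv_nsq x) * degen i x \<partial>\<Omega>)"

lemma sum_weighted_pair: "(\<Sum>i\<in>A. c * (a * U i + V i / a)) = c * (a * sum U A + sum V A / (a::real))"
  by (induct A rule: infinite_finite_induct) (auto simp: algebra_simps add_divide_distrib)

lemma integrable_mult_degen: "integrable \<Omega> f \<Longrightarrow> integrable \<Omega> (\<lambda>x. f x * degen i x)"
  by (intro integrable_mult_bounded abs_degen_le) measurable

lemma abs_defect_T_le:
  assumes a: "a > 0"
  shows "\<bar>defect_T\<bar> \<le> 3 / 2 * (a * B0 + (\<integral>x. (inv_nsq x)\<^sup>2 \<partial>\<Omega>) / a)"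
proof -
  define g where "g i x = 3 / 2 * (a * ((tc i x)\<^sup>2 * degen i x) + (inv_nsq x)\<^sup>2 * degen i x / a)" for i x
  have int: "integrable \<Omega> (\<lambda>x. (tc i x)\<^sup>2 * degen i x)" "integrable \<Omega> (\<lambda>x. (inv_nsq x)\<^sup>2 * degen i x)"
    if "i < d" for i
    using that integrable_tc_sq integrable_inv_nsq_sq by (simp_all add: integrable_mult_degen)
  have "\<bar>\<integral>x. tc i x * dg0 i x * degen i x \<partial>\<Omega>\<bar> \<le> (\<integral>x. g i x \<partial>\<Omega>)" if i: "i < d" for i
  proof (rule abs_integral_le_integral)
    show "integrable \<Omega> (\<lambda>x. tc i x * dg0 i x * degen i x)"
      by (rule integrable_mult_degen[OF integrable_tc_dg0[OF i]])
    show "integrable \<Omega> (g i)" unfolding g_def using int[OF i] by simp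
    fix x
    have "\<bar>tc i x * dg0 i x * degen i x\<bar> = \<bar>tc i x * dg0 i x\<bar> * degen i x"
      using degen_nonneg by (simp add: abs_mult)
    also have "\<dots> \<le> 3 * ((a * (tc i x)\<^sup>2 + (inv_nsq x)\<^sup>2 / a) / 2) * degen i x"
      by (rule mult_right_mono[OF abs_tc_dg0_le[OF i a] degen_nonneg])
    also have "\<dots> = g i x" unfolding g_def by (simp add: algebra_simps)
    finally show "\<bar>tc i x * dg0 i x * degen i x\<bar> \<le> g i x" .
  qed
  hence "\<bar>defect_T\<bar> \<le> (\<Sum>i<d. \<integral>x. g i x \<partial>\<Omega>)"
    unfolding defect_T_def by (intro order_trans[OF sum_abs] sum_mono) simp
  also have "\<dots> = (\<Sum>i<d. 3 / 2 * (a * (\<integral>x. (tc i x)\<^sup>2 * degen i x \<partial>\<Omega>)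
      + (\<integral>x. (inv_nsq x)\<^sup>2 * degen i x \<partial>\<Omega>) / a))"
    by (intro sum.cong) (simp_all add: g_def int)
  also have "\<dots> = 3 / 2 * (a * (\<Sum>i<d. \<integral>x. (tc i x)\<^sup>2 * degen i x \<partial>\<Omega>)
      + (\<Sum>i<d. \<integral>x. (inv_nsq x)\<^sup>2 * degen i x \<partial>\<Omega>) / a)"
    by (rule sum_weighted_pair)
  also have "\<dots> \<le> 3 / 2 * (a * B0 + (\<integral>x. (inv_nsq x)\<^sup>2 \<partial>\<Omega>) / a)"
    using sum_integral_tc_sq_degen_le sum_integral_mult_degen_le[OF integrable_inv_nsq_sq] a
    by (intro mult_left_mono add_mono divide_right_mono) auto
  finally show ?thesis .
qed

lemma abs_defect_Y_le:
  assumes a: "a > 0"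
  shows "\<bar>defect_Y\<bar> \<le> 1 / 2 * (a * \<sigma>\<^sup>2 + (\<integral>x. inv_nsq x \<partial>\<Omega>) / a)"
proof -
  define g where "g i x = 1 / 2 * (a * ((yc i x)\<^sup>2 * degen i x) + inv_nsq x * degen i x / a)" for i x
  have int: "integrable \<Omega> (\<lambda>x. (yc i x)\<^sup>2 * degen i x)" "integrable \<Omega> (\<lambda>x. inv_nsq x * degen i x)"
    if "i < d" for i
    using that integrable_yc_sq integrable_inv_nsq by (simp_all add: integrable_mult_degen)
  have "\<bar>\<integral>x. yc i x * (xc i x * inv_nsq x) * degen i x \<partial>\<Omega>\<bar> \<le> (\<integral>x. g i x \<partial>\<Omega>)" if i: "i < d" for i
  proof (rule abs_integral_le_integral)
    show "integrable \<Omega> (\<lambda>x. yc i x * (xc i x * inv_nsq x) * degen i x)"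
      by (rule integrable_mult_degen[OF integrable_yc_xc_inv_nsq[OF i]])
    show "integrable \<Omega> (g i)" unfolding g_def using int[OF i] by simp
    fix x
    have "\<bar>yc i x * (xc i x * inv_nsq x) * degen i x\<bar> = \<bar>yc i x * (xc i x * inv_nsq x)\<bar> * degen i x"
      using degen_nonneg by (simp add: abs_mult)
    also have "\<dots> \<le> (a * (yc i x)\<^sup>2 + inv_nsq x / a) / 2 * degen i x"
      by (rule mult_right_mono[OF abs_yc_xc_inv_nsq_le[OF i a] degen_nonneg])
    also have "\<dots> = g i x" unfolding g_def by (simp add: algebra_simps)
    finally show "\<bar>yc i x * (xc i x * inv_nsq x) * degen i x\<bar> \<le> g i x" .
  qed
  hence "\<bar>defect_Y\<bar> \<le> (\<Sum>i<d. \<integral>x. g i x \<partial>\<Omega>)"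
    unfolding defect_Y_def by (intro order_trans[OF sum_abs] sum_mono) simp
  also have "\<dots> = (\<Sum>i<d. 1 / 2 * (a * (\<integral>x. (yc i x)\<^sup>2 * degen i x \<partial>\<Omega>)
      + (\<integral>x. inv_nsq x * degen i x \<partial>\<Omega>) / a))"
    by (intro sum.cong) (simp_all add: g_def int)
  also have "\<dots> = 1 / 2 * (a * (\<Sum>i<d. \<integral>x. (yc i x)\<^sup>2 * degen i x \<partial>\<Omega>)
      + (\<Sum>i<d. \<integral>x. inv_nsq x * degen i x \<partial>\<Omega>) / a)"
    by (rule sum_weighted_pair)
  also have "\<dots> \<le> 1 / 2 * (a * \<sigma>\<^sup>2 + (\<integral>x. inv_nsq x \<partial>\<Omega>) / a)"
    using sum_integral_yc_sq_degen_le sum_integral_mult_degen_le[OF integrable_inv_nsq inv_nsq_nonneg] a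
    by (intro mult_left_mono add_mono divide_right_mono) auto
  finally show ?thesis .
qed

definition "tc0 i x = tc i x - \<sigma>\<^sup>2"
definition "tc0_sum x = (\<Sum>i<d. tc0 i x)"
definition "tc0_wsum x = (\<Sum>i<d. tc0 i x * ((xc i x)\<^sup>2 * (inv_nsq x)\<^sup>2))"

lemma tc0_meas[measurable]: "i < d \<Longrightarrow> tc0 i \<in> borel_measurable \<Omega>"
  unfolding tc0_def by measurable

lemma tc0_sum_meas[measurable]: "tc0_sum \<in> borel_measurable \<Omega>"
  unfolding tc0_sum_def by (rule borel_measurable_sum) simp

lemma
  assumes i: "i < d"
  shows integrable_tc0_sq: "integrable \<Omega> (\<lambda>x. (tc0 i x)\<^sup>2)"
    and integral_tc0_sq_le: "(\<integral>x. (tc0 i x)\<^sup>2 \<partial>\<Omega>) \<le> B0"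
proof -
  have eq: "(\<lambda>x. (tc0 i x)\<^sup>2) = (\<lambda>x. (tc i x)\<^sup>2 - 2 * \<sigma>\<^sup>2 * tc i x + \<sigma>\<^sup>2 * \<sigma>\<^sup>2)"
    by (auto simp: tc0_def power2_eq_square algebra_simps)
  show "integrable \<Omega> (\<lambda>x. (tc0 i x)\<^sup>2)"
    unfolding eq using integrable_tc_sq[OF i] integrable_tc[OF i] by simp
  have "(\<integral>x. (tc0 i x)\<^sup>2 \<partial>\<Omega>) = (\<integral>x. (tc i x)\<^sup>2 \<partial>\<Omega>) - \<sigma>\<^sup>2 * \<sigma>\<^sup>2"
    unfolding eq using integrable_tc_sq[OF i] integrable_tc[OF i] integral_tc[OF i]
    by (simp add: \<Omega>.prob_space)
  moreover have "0 \<le> \<sigma>\<^sup>2 * \<sigma>\<^sup>2" by simp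
  ultimately show "(\<integral>x. (tc0 i x)\<^sup>2 \<partial>\<Omega>) \<le> B0" using integral_tc_sq_le[OF i] by linarith
qed

lemma integrable_tc0_mult: "i < d \<Longrightarrow> j < d \<Longrightarrow> integrable \<Omega> (\<lambda>x. tc0 i x * tc0 j x)"
  by (rule integrable_mult_square_integrable) (simp_all add: integrable_tc0_sq)

lemma integral_tc0_mult_eq_0:
  assumes i: "i < d" and j: "j < d" and ij: "i \<noteq> j"
  shows "(\<integral>x. tc0 i x * tc0 j x \<partial>\<Omega>) = 0"
proof -
  have "(\<integral>x. (T i (x i) - \<sigma>\<^sup>2) * tc0 j x \<partial>\<Omega>) = (\<integral>w. T i w - \<sigma>\<^sup>2 \<partial>M) * (\<integral>x. tc0 j x \<partial>\<Omega>)"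
  proof (rule integral_mult_coordinate_indep)
    show "integrable \<Omega> (\<lambda>x. (T i (x i) - \<sigma>\<^sup>2) * tc0 j x)"
      using integrable_tc0_mult[OF i j] by (simp add: tc0_def tc_def)
    show "integrable \<Omega> (tc0 j)" unfolding tc0_def using integrable_tc[OF j] by simp
  qed (use i ij in \<open>auto simp: tc0_def tc_def\<close>)
  moreover have "(\<integral>w. T i w - \<sigma>\<^sup>2 \<partial>M) = 0"
    using integrable_T[OF i] integral_T[OF i] by (simp add: M.prob_space)
  ultimately show ?thesis by (simp add: tc0_def tc_def)
qed

lemma integrable_tc0_sum_sq: "integrable \<Omega> (\<lambda>x. (tc0_sum x)\<^sup>2)"
  unfolding tc0_sum_def power2_eq_square sum_product
  by (intro Bochner_Integration.integrable_sum integrable_tc0_mult) auto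

lemma integral_tc0_sum_sq_le: "(\<integral>x. (tc0_sum x)\<^sup>2 \<partial>\<Omega>) \<le> real d * B0"
proof -
  have "(\<integral>x. (tc0_sum x)\<^sup>2 \<partial>\<Omega>) = (\<Sum>i<d. \<integral>x. (\<Sum>j<d. tc0 i x * tc0 j x) \<partial>\<Omega>)"
    unfolding tc0_sum_def power2_eq_square sum_product
    by (intro Bochner_Integration.integral_sum Bochner_Integration.integrable_sum integrable_tc0_mult) auto
  also have "\<dots> = (\<Sum>i<d. \<Sum>j<d. \<integral>x. tc0 i x * tc0 j x \<partial>\<Omega>)"
    by (intro sum.cong refl Bochner_Integration.integral_sum integrable_tc0_mult) auto
  also have "\<dots> = (\<Sum>i<d. \<integral>x. (tc0 i x)\<^sup>2 \<partial>\<Omega>)"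
  proof (rule sum.cong[OF refl])
    fix i assume "i \<in> {..<d}"
    hence i: "i < d" by simp
    have "(\<Sum>j<d. \<integral>x. tc0 i x * tc0 j x \<partial>\<Omega>) = (\<Sum>j\<in>{i}. \<integral>x. tc0 i x * tc0 j x \<partial>\<Omega>)"
      by (rule sum.mono_neutral_right) (use i integral_tc0_mult_eq_0[OF i] in auto)
    thus "(\<Sum>j<d. \<integral>x. tc0 i x * tc0 j x \<partial>\<Omega>) = (\<integral>x. (tc0 i x)\<^sup>2 \<partial>\<Omega>)"
      by (simp add: power2_eq_square)
  qed
  also have "\<dots> \<le> (\<Sum>i<d. B0)" by (rule sum_mono) (simp add: integral_tc0_sq_le)
  finally show ?thesis by simp
qed

lemma integrable_tc0_sum_inv_nsq: "integrable \<Omega> (\<lambda>x. tc0_sum x * inv_nsq x)"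
  by (rule integrable_mult_square_integrable)
     (simp_all add: integrable_tc0_sum_sq integrable_inv_nsq_sq)

lemma abs_integral_tc0_sum_inv_nsq_le:
  assumes a: "a > 0"
  shows "\<bar>\<integral>x. tc0_sum x * inv_nsq x \<partial>\<Omega>\<bar> \<le> (a * (real d * B0) + (\<integral>x. (inv_nsq x)\<^sup>2 \<partial>\<Omega>) / a) / 2"
proof -
  have "\<bar>\<integral>x. tc0_sum x * inv_nsq x \<partial>\<Omega>\<bar> \<le> (\<integral>x. (a * (tc0_sum x)\<^sup>2 + (inv_nsq x)\<^sup>2 / a) / 2 \<partial>\<Omega>)"
    by (rule abs_integral_le_integral[OF integrable_tc0_sum_inv_nsq _ abs_mult_le_weighted_squares[OF a]])
       (simp add: integrable_tc0_sum_sq integrable_inv_nsq_sq)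
  also have "\<dots> = (a * (\<integral>x. (tc0_sum x)\<^sup>2 \<partial>\<Omega>) + (\<integral>x. (inv_nsq x)\<^sup>2 \<partial>\<Omega>) / a) / 2"
    using integrable_tc0_sum_sq integrable_inv_nsq_sq by simp
  also have "\<dots> \<le> (a * (real d * B0) + (\<integral>x. (inv_nsq x)\<^sup>2 \<partial>\<Omega>) / a) / 2"
    using integral_tc0_sum_sq_le a by (intro divide_right_mono add_right_mono mult_left_mono) auto
  finally show ?thesis .
qed

lemma sum_xc_inv_nsq_sq_sq_le: "(\<Sum>i<d. ((xc i x)\<^sup>2 * (inv_nsq x)\<^sup>2)\<^sup>2) \<le> (inv_nsq x)\<^sup>2"
proof -
  have "(\<Sum>i<d. ((xc i x)\<^sup>2 * (inv_nsq x)\<^sup>2)\<^sup>2) \<le> (\<Sum>i<d. (xc i x)\<^sup>2 * (inv_nsq x)\<^sup>2)\<^sup>2"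
    by (rule sum_squares_le_square_sum) simp
  thus ?thesis by (simp add: sum_xc_sq_inv_nsq_sq)
qed

lemma abs_tc0_wsum_le:
  assumes a: "a > 0"
  shows "\<bar>tc0_wsum x\<bar> \<le> (a * (\<Sum>i<d. (tc0 i x)\<^sup>2) + (inv_nsq x)\<^sup>2 / a) / 2"
proof -
  have "\<bar>tc0_wsum x\<bar> \<le> (\<Sum>i<d. \<bar>tc0 i x * ((xc i x)\<^sup>2 * (inv_nsq x)\<^sup>2)\<bar>)"
    unfolding tc0_wsum_def by (rule sum_abs)
  also have "\<dots> \<le> (\<Sum>i<d. 1 / 2 * (a * (tc0 i x)\<^sup>2 + ((xc i x)\<^sup>2 * (inv_nsq x)\<^sup>2)\<^sup>2 / a))"
    using abs_mult_le_weighted_squares[OF a] by (intro sum_mono) simp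
  also have "\<dots> = 1 / 2 * (a * (\<Sum>i<d. (tc0 i x)\<^sup>2) + (\<Sum>i<d. ((xc i x)\<^sup>2 * (inv_nsq x)\<^sup>2)\<^sup>2) / a)"
    by (rule sum_weighted_pair)
  also have "\<dots> \<le> 1 / 2 * (a * (\<Sum>i<d. (tc0 i x)\<^sup>2) + (inv_nsq x)\<^sup>2 / a)"
    using sum_xc_inv_nsq_sq_sq_le a by (intro mult_left_mono add_left_mono divide_right_mono) auto
  finally show ?thesis by simp
qed

lemma integrable_tc0_wsum: "integrable \<Omega> tc0_wsum"
  unfolding tc0_wsum_def
proof (intro Bochner_Integration.integrable_sum integrable_mult_square_integrable)
  fix i assume "i \<in> {..<d}"
  hence i: "i < d" by simp
  show "integrable \<Omega> (\<lambda>x. ((xc i x)\<^sup>2 * (inv_nsq x)\<^sup>2)\<^sup>2)"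
  proof (rule Bochner_Integration.integrable_bound[OF integrable_inv_nsq_sq])
    have "((xc i x)\<^sup>2 * (inv_nsq x)\<^sup>2)\<^sup>2 \<le> (inv_nsq x)\<^sup>2" for x
      using xc_sq_inv_nsq_sq_le[OF i, of x] by (intro power_mono) auto
    thus "AE x in \<Omega>. norm (((xc i x)\<^sup>2 * (inv_nsq x)\<^sup>2)\<^sup>2) \<le> norm ((inv_nsq x)\<^sup>2)" by simp
  qed (use i in measurable)
qed (simp_all add: integrable_tc0_sq)

lemma abs_integral_tc0_wsum_le:
  assumes a: "a > 0"
  shows "\<bar>\<integral>x. tc0_wsum x \<partial>\<Omega>\<bar> \<le> (a * (real d * B0) + (\<integral>x. (inv_nsq x)\<^sup>2 \<partial>\<Omega>) / a) / 2"
proof -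
  have int: "integrable \<Omega> (\<lambda>x. \<Sum>i<d. (tc0 i x)\<^sup>2)"
    by (intro Bochner_Integration.integrable_sum) (simp add: integrable_tc0_sq)
  have "\<bar>\<integral>x. tc0_wsum x \<partial>\<Omega>\<bar> \<le> (\<integral>x. (a * (\<Sum>i<d. (tc0 i x)\<^sup>2) + (inv_nsq x)\<^sup>2 / a) / 2 \<partial>\<Omega>)"
    by (rule abs_integral_le_integral[OF integrable_tc0_wsum _ abs_tc0_wsum_le[OF a]])
       (use int integrable_inv_nsq_sq in simp)
  also have "\<dots> = (a * (\<Sum>i<d. \<integral>x. (tc0 i x)\<^sup>2 \<partial>\<Omega>) + (\<integral>x. (inv_nsq x)\<^sup>2 \<partial>\<Omega>) / a) / 2"
    using int integrable_inv_nsq_sq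
    by (simp add: Bochner_Integration.integral_sum integrable_tc0_sq)
  also have "\<dots> \<le> (a * (real d * B0) + (\<integral>x. (inv_nsq x)\<^sup>2 \<partial>\<Omega>) / a) / 2"
    using sum_mono[of "{..<d}" "\<lambda>i. \<integral>x. (tc0 i x)\<^sup>2 \<partial>\<Omega>" "\<lambda>_. B0"] integral_tc0_sq_le a
    by (intro divide_right_mono add_right_mono mult_left_mono) auto
  finally show ?thesis .
qed

definition "cross_term = (\<Sum>i<d. \<integral>x. yc i x * (xc i x * inv_nsq x) \<partial>\<Omega>)"

lemma integral_yc_xc_inv_nsq_eq:
  assumes i: "i < d"
  shows "(\<integral>x. yc i x * (xc i x * inv_nsq x) \<partial>\<Omega>) = (\<integral>x. tc i x * dg0 i x \<partial>\<Omega>)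
      - (\<integral>x. tc i x * dg0 i x * degen i x \<partial>\<Omega>) + (\<integral>x. yc i x * (xc i x * inv_nsq x) * degen i x \<partial>\<Omega>)"
proof -
  have "(\<integral>x. yc i x * (xc i x * inv_nsq x) * (1 - degen i x) \<partial>\<Omega>)
      = (\<integral>x. yc i x * (xc i x * inv_nsq x) \<partial>\<Omega>) - (\<integral>x. yc i x * (xc i x * inv_nsq x) * degen i x \<partial>\<Omega>)"
    using integrable_yc_xc_inv_nsq[OF i] integrable_mult_degen[OF integrable_yc_xc_inv_nsq[OF i]]
    by (simp add: right_diff_distrib)
  moreover have "(\<integral>x. tc i x * dg0 i x * (1 - degen i x) \<partial>\<Omega>)
      = (\<integral>x. tc i x * dg0 i x \<partial>\<Omega>) - (\<integral>x. tc i x * dg0 i x * degen i x \<partial>\<Omega>)"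
    using integrable_tc_dg0[OF i] integrable_mult_degen[OF integrable_tc_dg0[OF i]]
    by (simp add: right_diff_distrib)
  ultimately show ?thesis using integral_stein_nondegen[OF i] by simp
qed

text \<open>Split T_i = \<sigma>^2 + (T_i - \<sigma>^2) and use that the x_i^2 / |x|^4 sum to 1 / |x|^2.\<close>

lemma sum_tc_dg0:
  "(\<Sum>i<d. tc i x * dg0 i x) = \<sigma>\<^sup>2 * (real d - 2) * inv_nsq x + tc0_sum x * inv_nsq x - 2 * tc0_wsum x"
proof -
  have "(\<Sum>i<d. tc i x * dg0 i x) = (\<Sum>i<d. tc0 i x * inv_nsq x - 2 * (tc0 i x * ((xc i x)\<^sup>2 * (inv_nsq x)\<^sup>2))
        + \<sigma>\<^sup>2 * inv_nsq x - 2 * \<sigma>\<^sup>2 * ((xc i x)\<^sup>2 * (inv_nsq x)\<^sup>2))"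
    by (rule sum.cong[OF refl]) (simp add: tc0_def dg0_def algebra_simps)
  also have "\<dots> = tc0_sum x * inv_nsq x - 2 * tc0_wsum x + real d * \<sigma>\<^sup>2 * inv_nsq x
      - 2 * \<sigma>\<^sup>2 * (\<Sum>i<d. (xc i x)\<^sup>2 * (inv_nsq x)\<^sup>2)"
    by (simp add: tc0_sum_def tc0_wsum_def sum.distrib sum_subtractf sum_distrib_left sum_distrib_right)
  also have "\<dots> = \<sigma>\<^sup>2 * (real d - 2) * inv_nsq x + tc0_sum x * inv_nsq x - 2 * tc0_wsum x"
    unfolding sum_xc_sq_inv_nsq_sq by (simp add: algebra_simps)
  finally show ?thesis .
qed

definition "stein_remainder =
  (\<integral>x. tc0_sum x * inv_nsq x \<partial>\<Omega>) - 2 * (\<integral>x. tc0_wsum x \<partial>\<Omega>) - defect_T + defect_Y"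

lemma cross_term_eq: "cross_term = \<sigma>\<^sup>2 * (real d - 2) * (\<integral>x. inv_nsq x \<partial>\<Omega>) + stein_remainder"
proof -
  have "cross_term = (\<Sum>i<d. \<integral>x. tc i x * dg0 i x \<partial>\<Omega>) - defect_T + defect_Y"
    unfolding cross_term_def defect_T_def defect_Y_def
    by (simp add: integral_yc_xc_inv_nsq_eq sum.distrib sum_subtractf)
  also have "(\<Sum>i<d. \<integral>x. tc i x * dg0 i x \<partial>\<Omega>) = (\<integral>x. (\<Sum>i<d. tc i x * dg0 i x) \<partial>\<Omega>)"
    by (rule Bochner_Integration.integral_sum[symmetric]) (simp add: integrable_tc_dg0)
  also have "\<dots> = \<sigma>\<^sup>2 * (real d - 2) * (\<integral>x. inv_nsq x \<partial>\<Omega>)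
      + (\<integral>x. tc0_sum x * inv_nsq x \<partial>\<Omega>) - 2 * (\<integral>x. tc0_wsum x \<partial>\<Omega>)"
    unfolding sum_tc_dg0 using integrable_inv_nsq integrable_tc0_sum_inv_nsq integrable_tc0_wsum by simp
  finally show ?thesis unfolding stein_remainder_def by simp
qed

lemma
  shows integral_inv_nsq_sq_mult_d_sqrt_le: "(\<integral>x. (inv_nsq x)\<^sup>2 \<partial>\<Omega>) * (real d * sqrt (real d)) \<le> C0 / sqrt (real d)"
    and integral_inv_nsq_sq_mult_sqrt_le: "(\<integral>x. (inv_nsq x)\<^sup>2 \<partial>\<Omega>) * sqrt (real d) \<le> C0 / sqrt (real d)"
    and integral_inv_nsq_mult_sqrt_le: "(\<integral>x. inv_nsq x \<partial>\<Omega>) * sqrt (real d) \<le> (1 + C0) / (2 * sqrt (real d))"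
proof -
  define s where "s = sqrt (real d)"
  have s: "s > 0" "s * s = real d" "1 \<le> real d" using d_pos by (auto simp: s_def)
  have "(\<integral>x. (inv_nsq x)\<^sup>2 \<partial>\<Omega>) * (real d * s) \<le> C0 / (real d)\<^sup>2 * (real d * s)"
    using integral_inv_nsq_sq_le s by (intro mult_right_mono) auto
  also have "\<dots> = C0 / s" using s by (simp add: field_simps power2_eq_square)
  finally show *: "(\<integral>x. (inv_nsq x)\<^sup>2 \<partial>\<Omega>) * (real d * s) \<le> C0 / s" .
  have "(\<integral>x. (inv_nsq x)\<^sup>2 \<partial>\<Omega>) * s \<le> (\<integral>x. (inv_nsq x)\<^sup>2 \<partial>\<Omega>) * (real d * s)"
    using s by (intro mult_left_mono) auto
  thus "(\<integral>x. (inv_nsq x)\<^sup>2 \<partial>\<Omega>) * s \<le> C0 / s" using * by simp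
  have "(\<integral>x. inv_nsq x \<partial>\<Omega>) * s \<le> (1 + C0) / (2 * real d) * s"
    using integral_inv_nsq_le s by (intro mult_right_mono) auto
  also have "\<dots> = (1 + C0) / (2 * s)" unfolding s(2)[symmetric] using s(1) by (simp add: field_simps)
  finally show "(\<integral>x. inv_nsq x \<partial>\<Omega>) * s \<le> (1 + C0) / (2 * s)" .
qed

lemma abs_stein_remainder_le: "\<bar>stein_remainder\<bar> \<le> stein_error_const B C \<sigma> / sqrt (real d)"
proof -
  define s where "s = sqrt (real d)"
  have s: "s > 0" "s * s = real d" using d_pos by (auto simp: s_def)
  have a1: "1 / (real d * s) > 0" and a2: "1 / s > 0" using s d_pos by auto
  note I2 = integral_inv_nsq_sq_mult_d_sqrt_le[folded s_def] integral_inv_nsq_sq_mult_sqrt_le[folded s_def]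
  have U: "\<bar>\<integral>x. tc0_sum x * inv_nsq x \<partial>\<Omega>\<bar> \<le> (B0 / s + C0 / s) / 2"
    using abs_integral_tc0_sum_inv_nsq_le[OF a1] I2(1) s d_pos by (simp add: field_simps)
  have W: "\<bar>\<integral>x. tc0_wsum x \<partial>\<Omega>\<bar> \<le> (B0 / s + C0 / s) / 2"
    using abs_integral_tc0_wsum_le[OF a1] I2(1) s d_pos by (simp add: field_simps)
  have DT: "\<bar>defect_T\<bar> \<le> 3 / 2 * (B0 / s + C0 / s)"
    using abs_defect_T_le[OF a2] I2(2) s by (simp add: field_simps)
  have DY: "\<bar>defect_Y\<bar> \<le> 1 / 2 * (\<sigma>\<^sup>2 / s + (1 + C0) / (2 * s))"
    using abs_defect_Y_le[OF a2] integral_inv_nsq_mult_sqrt_le[folded s_def] s by (simp add: field_simps)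
  have "\<bar>stein_remainder\<bar> \<le> \<bar>\<integral>x. tc0_sum x * inv_nsq x \<partial>\<Omega>\<bar> + 2 * \<bar>\<integral>x. tc0_wsum x \<partial>\<Omega>\<bar>
      + \<bar>defect_T\<bar> + \<bar>defect_Y\<bar>"
    unfolding stein_remainder_def by linarith
  also have "\<dots> \<le> (B0 / s + C0 / s) / 2 + 2 * ((B0 / s + C0 / s) / 2)
      + 3 / 2 * (B0 / s + C0 / s) + 1 / 2 * (\<sigma>\<^sup>2 / s + (1 + C0) / (2 * s))"
    using U W DT DY by linarith
  also have "\<dots> = (3 * (B0 + C0) + \<sigma>\<^sup>2 / 2 + (1 + C0) / 4) / s"
    using s by (simp add: field_simps)
  also have "\<dots> \<le> stein_error_const B C \<sigma> / s"
  proof (rule divide_right_mono)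
    have "stein_error_const B C \<sigma> = 4 * (B0 + C0) + \<sigma>\<^sup>2 + 1"
      by (simp add: stein_error_const_def B0_def C0_def)
    thus "3 * (B0 + C0) + \<sigma>\<^sup>2 / 2 + (1 + C0) / 4 \<le> stein_error_const B C \<sigma>"
      using B0_nonneg C0_nonneg by (simp add: field_simps)
  qed (use s in simp)
  finally show ?thesis unfolding s_def .
qed

definition "loss lam x = (\<Sum>i<d. (yc i x - lam * (xc i x * inv_nsq x))\<^sup>2)"

lemma loss_nonneg: "loss lam x \<ge> 0"
  unfolding loss_def by (simp add: sum_nonneg)

lemma loss_eq: "loss lam x = (\<Sum>i<d. (yc i x)\<^sup>2) - 2 * lam * (\<Sum>i<d. yc i x * (xc i x * inv_nsq x))
    + lam\<^sup>2 * inv_nsq x"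
proof -
  have "loss lam x = (\<Sum>i<d. (yc i x)\<^sup>2 - 2 * lam * (yc i x * (xc i x * inv_nsq x))
      + lam\<^sup>2 * ((xc i x)\<^sup>2 * (inv_nsq x)\<^sup>2))"
    unfolding loss_def by (rule sum.cong[OF refl]) (simp add: power2_eq_square algebra_simps)
  thus ?thesis
    by (simp add: sum.distrib sum_subtractf sum_distrib_left[symmetric] sum_xc_sq_inv_nsq_sq)
qed

lemma
  shows integrable_loss: "integrable \<Omega> (loss lam)"
    and integral_loss: "(\<integral>x. loss lam x \<partial>\<Omega>)
      = real d * \<sigma>\<^sup>2 - 2 * lam * cross_term + lam\<^sup>2 * (\<integral>x. inv_nsq x \<partial>\<Omega>)"
proof -
  have int1: "integrable \<Omega> (\<lambda>x. \<Sum>i<d. (yc i x)\<^sup>2)"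
    by (intro Bochner_Integration.integrable_sum) (simp add: integrable_yc_sq)
  have int2: "integrable \<Omega> (\<lambda>x. \<Sum>i<d. yc i x * (xc i x * inv_nsq x))"
    by (intro Bochner_Integration.integrable_sum) (simp add: integrable_yc_xc_inv_nsq)
  show "integrable \<Omega> (loss lam)" unfolding loss_eq[abs_def] using int1 int2 integrable_inv_nsq by simp
  have "(\<integral>x. (\<Sum>i<d. (yc i x)\<^sup>2) \<partial>\<Omega>) = real d * \<sigma>\<^sup>2"
    by (subst Bochner_Integration.integral_sum) (auto simp: integrable_yc_sq integral_yc_sq)
  moreover have "(\<integral>x. (\<Sum>i<d. yc i x * (xc i x * inv_nsq x)) \<partial>\<Omega>) = cross_term"
    unfolding cross_term_def by (rule Bochner_Integration.integral_sum) (simp add: integrable_yc_xc_inv_nsq)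
  ultimately show "(\<integral>x. loss lam x \<partial>\<Omega>) = real d * \<sigma>\<^sup>2 - 2 * lam * cross_term + lam\<^sup>2 * (\<integral>x. inv_nsq x \<partial>\<Omega>)"
    unfolding loss_eq[abs_def] using int1 int2 integrable_inv_nsq by simp
qed

lemma
  shows integrable_nsq: "integrable \<Omega> nsq"
    and integral_nsq: "(\<integral>x. nsq x \<partial>\<Omega>) = real d * \<sigma>\<^sup>2 + sqnorm d \<theta>"
proof -
  have eq: "nsq = (\<lambda>x. \<Sum>i<d. (yc i x)\<^sup>2 + 2 * \<theta> i * yc i x + (\<theta> i)\<^sup>2)"
    by (auto simp: fun_eq_iff nsq_def xc_def yc_def power2_eq_square algebra_simps)
  show "integrable \<Omega> nsq" unfolding eq
    by (intro Bochner_Integration.integrable_sum) (simp add: integrable_yc_sq integrable_yc)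
  have "(\<integral>x. nsq x \<partial>\<Omega>) = (\<Sum>i<d. \<integral>x. (yc i x)\<^sup>2 + 2 * \<theta> i * yc i x + (\<theta> i)\<^sup>2 \<partial>\<Omega>)"
    unfolding eq by (rule Bochner_Integration.integral_sum) (simp add: integrable_yc_sq integrable_yc)
  also have "\<dots> = (\<Sum>i<d. \<sigma>\<^sup>2 + (\<theta> i)\<^sup>2)"
    by (rule sum.cong[OF refl])
       (simp add: integrable_yc_sq integrable_yc integral_yc_sq integral_yc \<Omega>.prob_space)
  finally show "(\<integral>x. nsq x \<partial>\<Omega>) = real d * \<sigma>\<^sup>2 + sqnorm d \<theta>" by (simp add: sqnorm_def sum.distrib)
qed

text \<open>Jensen's inequality for 1/t, via 2 \<le> t/m + m/t.\<close>

lemma integral_inv_nsq_ge: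
  assumes m: "(\<integral>x. nsq x \<partial>\<Omega>) > 0"
  shows "1 / (\<integral>x. nsq x \<partial>\<Omega>) \<le> (\<integral>x. inv_nsq x \<partial>\<Omega>)"
proof -
  define m where "m = (\<integral>x. nsq x \<partial>\<Omega>)"
  have m0: "m > 0" using m m_def by simp
  have "AE x in \<Omega>. 2 \<le> nsq x / m + m * inv_nsq x"
    using AE_nsq_pos
  proof (rule AE_mp, intro AE_I2 impI)
    fix x assume pos: "nsq x > 0"
    have "2 * nsq x * m \<le> (nsq x)\<^sup>2 + m\<^sup>2" using sum_squares_bound[of "nsq x" m] by simp
    thus "2 \<le> nsq x / m + m * inv_nsq x"
      using pos m0 by (simp add: inv_nsq_def field_simps power2_eq_square)
  qed
  hence "(\<integral>x. 2 \<partial>\<Omega>) \<le> (\<integral>x. nsq x / m + m * inv_nsq x \<partial>\<Omega>)"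
    by (intro integral_mono_AE) (simp_all add: integrable_nsq integrable_inv_nsq)
  also have "\<dots> = 1 + m * (\<integral>x. inv_nsq x \<partial>\<Omega>)"
    using integrable_nsq integrable_inv_nsq m0 by (simp add: m_def[symmetric])
  finally show ?thesis using m0 unfolding m_def[symmetric] by (simp add: \<Omega>.prob_space field_simps)
qed

lemma integral_loss_le:
  assumes \<sigma>: "\<sigma> > 0" and d2: "d \<ge> 2"
  defines "lam \<equiv> \<sigma>\<^sup>2 * (real d - 2)"
  shows "(\<integral>x. loss lam x \<partial>\<Omega>) \<le> real d * \<sigma>\<^sup>2 - lam\<^sup>2 / (real d * \<sigma>\<^sup>2 + sqnorm d \<theta>)
      + 2 * lam * (stein_error_const B C \<sigma> / sqrt (real d))"
proof -
  have lam0: "lam \<ge> 0" using d2 unfolding lam_def by simp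
  have "0 < real d * \<sigma>\<^sup>2 + sqnorm d \<theta>"
    using \<sigma> d_pos by (intro add_pos_nonneg) (auto simp: sqnorm_def sum_nonneg)
  hence "lam\<^sup>2 * (1 / (real d * \<sigma>\<^sup>2 + sqnorm d \<theta>)) \<le> lam\<^sup>2 * (\<integral>x. inv_nsq x \<partial>\<Omega>)"
    using integral_inv_nsq_ge by (intro mult_left_mono) (simp_all add: integral_nsq)
  moreover have "- (2 * lam * stein_remainder) \<le> 2 * lam * (stein_error_const B C \<sigma> / sqrt (real d))"
    using mult_left_mono[OF abs_stein_remainder_le, of "2 * lam"] lam0 abs_ge_minus_self[of stein_remainder]
      mult_left_mono[of "- stein_remainder" "\<bar>stein_remainder\<bar>" "2 * lam"]
    by linarith
  moreover have "(\<integral>x. loss lam x \<partial>\<Omega>)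
      = real d * \<sigma>\<^sup>2 - lam\<^sup>2 * (\<integral>x. inv_nsq x \<partial>\<Omega>) - 2 * lam * stein_remainder"
    unfolding integral_loss cross_term_eq lam_def[symmetric] by (simp add: power2_eq_square algebra_simps)
  ultimately show ?thesis by simp
qed

lemma nn_integral_loss_shrink:
  "(\<integral>\<^sup>+ w. ennreal (sqnorm d (\<lambda>i. shrink d lam (translate d \<theta> (Y w)) i - \<theta> i)) \<partial>M)
     = ennreal (\<integral>x. loss lam x \<partial>\<Omega>)"
proof -
  define F where "F v = ennreal (sqnorm d (\<lambda>i. shrink d lam (translate d \<theta> v) i - \<theta> i))" for v
  have "F = (\<lambda>v. ennreal (\<Sum>i<d. ((v i + \<theta> i) * (1 - lam / (\<Sum>j<d. (v j + \<theta> j)\<^sup>2)) - \<theta> i)\<^sup>2))"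
    by (auto simp: fun_eq_iff F_def sqnorm_def shrink_def translate_def)
  hence F_meas: "F \<in> borel_measurable (vec_space d)" unfolding vec_space_def by simp
  have "sqnorm d (\<lambda>i. shrink d lam (translate d \<theta> (yvec x)) i - \<theta> i) = loss lam x" for x
    unfolding sqnorm_def loss_def
  proof (rule sum.cong[OF refl])
    fix i assume "i \<in> {..<d}"
    thus "(shrink d lam (translate d \<theta> (yvec x)) i - \<theta> i)\<^sup>2 = (yc i x - lam * (xc i x * inv_nsq x))\<^sup>2"
      using sqnorm_translate_yvec[of x]
      by (simp add: shrink_def translate_def yvec_def yc_def xc_def inv_nsq_def algebra_simps)
  qed
  hence "(\<integral>\<^sup>+ x. F (yvec x) \<partial>\<Omega>) = (\<integral>\<^sup>+ x. ennreal (loss lam x) \<partial>\<Omega>)" by (simp add: F_def)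
  also have "\<dots> = ennreal (\<integral>x. loss lam x \<partial>\<Omega>)"
    by (rule nn_integral_eq_integral) (auto simp: integrable_loss loss_nonneg)
  finally show ?thesis using nn_integral_Y_eq_yvec[OF F_meas] by (simp add: F_def)
qed

lemma nn_integral_loss_identity:
  "(\<integral>\<^sup>+ w. ennreal (sqnorm d (\<lambda>i. translate d \<theta> (Y w) i - \<theta> i)) \<partial>M) = ennreal (real d * \<sigma>\<^sup>2)"
proof -
  have "sqnorm d (\<lambda>i. translate d \<theta> (Y w) i - \<theta> i) = (\<Sum>i<d. (Y w i)\<^sup>2)" for w
    unfolding sqnorm_def translate_def by (rule sum.cong) auto
  moreover have "integrable M (\<lambda>w. \<Sum>i<d. (Y w i)\<^sup>2)"
    by (intro Bochner_Integration.integrable_sum) (simp add: integrable_Y_sq)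
  ultimately have "(\<integral>\<^sup>+ w. ennreal (sqnorm d (\<lambda>i. translate d \<theta> (Y w) i - \<theta> i)) \<partial>M)
      = ennreal (\<integral>w. (\<Sum>i<d. (Y w i)\<^sup>2) \<partial>M)"
    by (simp add: nn_integral_eq_integral sum_nonneg)
  also have "(\<integral>w. (\<Sum>i<d. (Y w i)\<^sup>2) \<partial>M) = real d * \<sigma>\<^sup>2"
    by (subst Bochner_Integration.integral_sum) (auto simp: integrable_Y_sq integral_Y_sq)
  finally show ?thesis .
qed

end

section \<open>Mixtures\<close>

lemma mixture_eq_bind:
  fixes \<mu> :: "'s measure" and m :: "'s \<Rightarrow> 'a measure" and N :: "'a measure"
  assumes ne: "space \<mu> \<noteq> {}" and K: "m \<in> measurable \<mu> (subprob_algebra N)"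
    and sets_m: "\<And>s. s \<in> space \<mu> \<Longrightarrow> sets (m s) = sets N"
  shows "mixture \<mu> m N = \<mu> \<bind> m"
proof -
  have "mixture \<mu> m N = measure_of (space N) (sets N) (emeasure (\<mu> \<bind> m))"
    unfolding mixture_def
  proof (rule measure_of_eq)
    show "sets N \<subseteq> Pow (space N)" by (rule sets.space_closed)
    fix a assume "a \<in> sigma_sets (space N) (sets N)"
    hence "a \<in> sets N" by (simp add: sets.sigma_sets_eq)
    thus "(\<integral>\<^sup>+ s. emeasure (m s) a \<partial>\<mu>) = emeasure (\<mu> \<bind> m) a"
      by (rule emeasure_bind[OF ne K, symmetric])
  qed
  also have "\<dots> = \<mu> \<bind> m"
    using measure_of_of_measure[of "\<mu> \<bind> m"] sets_bind[OF sets_m ne] space_bind[OF sets_m ne] by simp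
  finally show ?thesis .
qed

lemma nn_integral_obs_law:
  fixes \<mu> :: "'s measure" and P :: "'s \<Rightarrow> 'w measure" and Y :: "'s \<Rightarrow> 'w \<Rightarrow> nat \<Rightarrow> real"
  assumes \<mu>: "prob_space \<mu>" and P: "\<And>s. s \<in> space \<mu> \<Longrightarrow> prob_space (P s)"
    and Y: "\<And>s. s \<in> space \<mu> \<Longrightarrow> Y s \<in> measurable (P s) (vec_space d)"
    and kernel_meas: "\<And>A. A \<in> sets (vec_space d) \<Longrightarrow>
           (\<lambda>s. emeasure (distr (P s) (vec_space d) (Y s)) A) \<in> borel_measurable \<mu>"
    and g: "g \<in> borel_measurable (vec_space d)"
  shows "(\<integral>\<^sup>+ x. g x \<partial>obs_law d \<mu> P Y \<theta>) = (\<integral>\<^sup>+ s. (\<integral>\<^sup>+ w. g (translate d \<theta> (Y s w)) \<partial>P s) \<partial>\<mu>)"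
proof -
  let ?m = "\<lambda>s. distr (P s) (vec_space d) (Y s)"
  have K: "?m \<in> measurable \<mu> (subprob_algebra (vec_space d))"
    by (rule measurable_subprob_algebra)
       (auto simp: kernel_meas P Y prob_space_imp_subprob_space prob_space.prob_space_distr)
  have ne: "space \<mu> \<noteq> {}" using \<mu> prob_space.not_empty by blast
  have [measurable]: "translate d \<theta> \<in> measurable (vec_space d) (vec_space d)"
    unfolding translate_def vec_space_def by measurable
  have mix: "mixture \<mu> ?m (vec_space d) = \<mu> \<bind> ?m"
    by (rule mixture_eq_bind[OF ne K]) simp
  have "sets (\<mu> \<bind> ?m) = sets (vec_space d)" by (rule sets_bind[OF _ ne]) simp
  hence "translate d \<theta> \<in> measurable (\<mu> \<bind> ?m) (vec_space d)"
    using measurable_cong_sets[of "\<mu> \<bind> ?m" "vec_space d" "vec_space d" "vec_space d"] by simp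
  hence "(\<integral>\<^sup>+ x. g x \<partial>obs_law d \<mu> P Y \<theta>) = (\<integral>\<^sup>+ y. g (translate d \<theta> y) \<partial>\<mu> \<bind> ?m)"
    unfolding obs_law_def mix by (rule nn_integral_distr) (use g in simp)
  also have "\<dots> = (\<integral>\<^sup>+ s. (\<integral>\<^sup>+ y. g (translate d \<theta> y) \<partial>?m s) \<partial>\<mu>)"
    by (rule nn_integral_bind[OF _ K]) (use g in measurable)
  also have "\<dots> = (\<integral>\<^sup>+ s. (\<integral>\<^sup>+ w. g (translate d \<theta> (Y s w)) \<partial>P s) \<partial>\<mu>)"
    by (rule nn_integral_cong) (use g Y in \<open>simp add: nn_integral_distr\<close>)
  finally show ?thesis .
qed

lemma risk_shrink_less_risk_identity:
  assumes \<mu>: "prob_space \<mu>"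
    and components: "\<And>s. s \<in> space \<mu> \<Longrightarrow> stein_component (P s) d (Y s) (T s) \<theta> \<sigma> B C"
    and kernel_meas: "\<And>A. A \<in> sets (vec_space d) \<Longrightarrow>
           (\<lambda>s. emeasure (distr (P s) (vec_space d) (Y s)) A) \<in> borel_measurable \<mu>"
    and \<sigma>: "\<sigma> > 0" and d2: "d \<ge> 2"
    and gain: "2 * (\<sigma>\<^sup>2 * (real d - 2)) * (stein_error_const B C \<sigma> / sqrt (real d))
      < (\<sigma>\<^sup>2 * (real d - 2))\<^sup>2 / (real d * \<sigma>\<^sup>2 + sqnorm d \<theta>)"
  shows "risk d (obs_law d \<mu> P Y \<theta>) \<theta> (shrink d (\<sigma>\<^sup>2 * (real d - 2)))
       < risk d (obs_law d \<mu> P Y \<theta>) \<theta> (\<lambda>x. x)"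
proof -
  let ?lam = "\<sigma>\<^sup>2 * (real d - 2)"
  have P_Y: "prob_space (P s)" "Y s \<in> measurable (P s) (vec_space d)" if "s \<in> space \<mu>" for s
  proof -
    interpret stein_component "P s" d "Y s" "T s" \<theta> \<sigma> B C by (rule components[OF that])
    show "prob_space (P s)" "Y s \<in> measurable (P s) (vec_space d)" by (fact prob_space_M Y_meas)+
  qed
  have obs: "(\<integral>\<^sup>+ x. g x \<partial>obs_law d \<mu> P Y \<theta>) = (\<integral>\<^sup>+ s. (\<integral>\<^sup>+ w. g (translate d \<theta> (Y s w)) \<partial>P s) \<partial>\<mu>)"
    if "g \<in> borel_measurable (vec_space d)" for g
    by (rule nn_integral_obs_law[OF \<mu> _ _ kernel_meas that]) (simp_all add: P_Y)
  define b where "b = real d * \<sigma>\<^sup>2 - ?lam\<^sup>2 / (real d * \<sigma>\<^sup>2 + sqnorm d \<theta>)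
      + 2 * ?lam * (stein_error_const B C \<sigma> / sqrt (real d))"
  have "risk d (obs_law d \<mu> P Y \<theta>) \<theta> (shrink d ?lam)
      = (\<integral>\<^sup>+ s. (\<integral>\<^sup>+ w. ennreal (sqnorm d (\<lambda>i. shrink d ?lam (translate d \<theta> (Y s w)) i - \<theta> i)) \<partial>P s) \<partial>\<mu>)"
    unfolding risk_def by (rule obs) (simp add: sqnorm_def shrink_def vec_space_def)
  also have "\<dots> \<le> (\<integral>\<^sup>+ s. ennreal b \<partial>\<mu>)"
  proof (rule nn_integral_mono)
    fix s assume "s \<in> space \<mu>"
    then interpret stein_component "P s" d "Y s" "T s" \<theta> \<sigma> B C by (rule components)
    show "(\<integral>\<^sup>+ w. ennreal (sqnorm d (\<lambda>i. shrink d ?lam (translate d \<theta> (Y s w)) i - \<theta> i)) \<partial>P s)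
        \<le> ennreal b"
      unfolding nn_integral_loss_shrink b_def by (intro ennreal_leI integral_loss_le \<sigma> d2)
  qed
  also have "\<dots> < (\<integral>\<^sup>+ s. ennreal (real d * \<sigma>\<^sup>2) \<partial>\<mu>)"
    using gain \<sigma> d2 by (simp add: prob_space.emeasure_space_1[OF \<mu>] b_def ennreal_lessI)
  also have "\<dots> = (\<integral>\<^sup>+ s. (\<integral>\<^sup>+ w. ennreal (sqnorm d (\<lambda>i. translate d \<theta> (Y s w) i - \<theta> i)) \<partial>P s) \<partial>\<mu>)"
  proof (rule nn_integral_cong)
    fix s assume "s \<in> space \<mu>"
    then interpret stein_component "P s" d "Y s" "T s" \<theta> \<sigma> B C by (rule components)
    show "ennreal (real d * \<sigma>\<^sup>2)
        = (\<integral>\<^sup>+ w. ennreal (sqnorm d (\<lambda>i. translate d \<theta> (Y s w) i - \<theta> i)) \<partial>P s)"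
      by (rule nn_integral_loss_identity[symmetric])
  qed
  also have "\<dots> = risk d (obs_law d \<mu> P Y \<theta>) \<theta> (\<lambda>x. x)"
    unfolding risk_def by (rule obs[symmetric]) (simp add: sqnorm_def vec_space_def)
  finally show ?thesis .
qed

lemma shrinkage_gain_pos:
  fixes \<sigma> c K t :: real and d :: nat
  assumes \<sigma>: "\<sigma> > 0" and c: "c > 0" and d4: "d \<ge> 4" and t: "0 \<le> t" "t \<le> c * real d"
    and K: "2 * K / sqrt (real d) < \<sigma>\<^sup>2 / (2 * (\<sigma>\<^sup>2 + c))"
  shows "2 * (\<sigma>\<^sup>2 * (real d - 2)) * (K / sqrt (real d)) < (\<sigma>\<^sup>2 * (real d - 2))\<^sup>2 / (real d * \<sigma>\<^sup>2 + t)"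
proof -
  define lam where "lam = \<sigma>\<^sup>2 * (real d - 2)"
  have lam: "\<sigma>\<^sup>2 * real d \<le> 2 * lam" "lam > 0" using d4 \<sigma> by (auto simp: lam_def algebra_simps)
  have "0 < real d * \<sigma>\<^sup>2" using \<sigma> d4 by simp
  hence den: "0 < real d * \<sigma>\<^sup>2 + t" "real d * \<sigma>\<^sup>2 + t \<le> real d * (\<sigma>\<^sup>2 + c)"
    using t by (auto simp: algebra_simps)
  have "\<sigma>\<^sup>2 / (2 * (\<sigma>\<^sup>2 + c)) = \<sigma>\<^sup>2 * real d / (2 * (real d * (\<sigma>\<^sup>2 + c)))"
    using d4 by simp
  also have "\<dots> = (\<sigma>\<^sup>2 * real d / 2) / (real d * (\<sigma>\<^sup>2 + c))" by simp
  also have "\<dots> \<le> lam / (real d * (\<sigma>\<^sup>2 + c))"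
    using lam c by (intro divide_right_mono) auto
  also have "\<dots> \<le> lam / (real d * \<sigma>\<^sup>2 + t)"
    using den lam by (intro divide_left_mono) auto
  finally have "2 * (K / sqrt (real d)) < lam / (real d * \<sigma>\<^sup>2 + t)" using K by simp
  from mult_strict_left_mono[OF this lam(2)]
  show ?thesis unfolding lam_def[symmetric] by (simp add: power2_eq_square mult_ac)
qed

theorem mainTheorem5:
  fixes \<mu> :: "nat \<Rightarrow> 's measure"
    and P :: "nat \<Rightarrow> 's \<Rightarrow> 'w measure"
    and Y :: "nat \<Rightarrow> 's \<Rightarrow> 'w \<Rightarrow> nat \<Rightarrow> real"
    and T :: "nat \<Rightarrow> 's \<Rightarrow> nat \<Rightarrow> 'w \<Rightarrow> real"
    and \<theta> :: "nat \<Rightarrow> nat \<Rightarrow> real"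
    and \<sigma> B C :: real
  assumes mu_prob: "\<And>d. prob_space (\<mu> d)"
    and P_prob: "\<And>d s. s \<in> space (\<mu> d) \<Longrightarrow> prob_space (P d s)"
    and Y_meas: "\<And>d s. s \<in> space (\<mu> d) \<Longrightarrow> Y d s \<in> measurable (P d s) (vec_space d)"
    and kernel_meas: "\<And>d A. A \<in> sets (vec_space d) \<Longrightarrow>
           (\<lambda>s. emeasure (distr (P d s) (vec_space d) (Y d s)) A) \<in> borel_measurable (\<mu> d)"
    and mean_zero: "\<And>d s i. s \<in> space (\<mu> d) \<Longrightarrow> i < d \<Longrightarrow>
           integrable (P d s) (\<lambda>w. Y d s w i) \<and> (\<integral>w. Y d s w i \<partial>P d s) = 0"
    and covariance: "\<And>d s i j. s \<in> space (\<mu> d) \<Longrightarrow> i < d \<Longrightarrow> j < d \<Longrightarrow>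
           integrable (P d s) (\<lambda>w. Y d s w i * Y d s w j) \<and>
           (\<integral>w. Y d s w i * Y d s w j \<partial>P d s) = (if i = j then \<sigma>\<^sup>2 else 0)"
    and sigma_pos: "\<sigma> > 0"
    and indep: "\<And>d s. s \<in> space (\<mu> d) \<Longrightarrow>
           prob_space.indep_vars (P d s) (\<lambda>_. borel) (\<lambda>i w. Y d s w i) {..<d}"
    and stein: "\<And>d s i. s \<in> space (\<mu> d) \<Longrightarrow> i < d \<Longrightarrow>
           stein_kernel (P d s) (\<lambda>w. Y d s w i) (T d s i)"
    and stein_bound: "\<And>d s i. s \<in> space (\<mu> d) \<Longrightarrow> i < d \<Longrightarrow>
           (\<integral>\<^sup>+ w. ennreal ((T d s i w)\<^sup>2) \<partial>P d s) \<le> ennreal B"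
    and sobolev: "\<And>d. in_W12 d (obs_law d (\<mu> d) (P d) (Y d) (\<theta> d)) (g0 d)"
    and inv_moment: "\<And>d s. s \<in> space (\<mu> d) \<Longrightarrow>
           (\<integral>\<^sup>+ w. (ennreal (real d) / ennreal (sqnorm d (translate d (\<theta> d) (Y d s w))))\<^sup>2 \<partial>P d s)
             \<le> ennreal C"
    and theta_growth: "(\<lambda>d. sqnorm d (\<theta> d)) \<in> O(\<lambda>d. real d)"
  shows "\<forall>\<^sub>F d in sequentially.
           risk d (obs_law d (\<mu> d) (P d) (Y d) (\<theta> d)) (\<theta> d) (shrink d (\<sigma>\<^sup>2 * (real d - 2)))
         < risk d (obs_law d (\<mu> d) (P d) (Y d) (\<theta> d)) (\<theta> d) (\<lambda>x. x)"
proof -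
  from theta_growth obtain c where c: "c > 0"
    and theta_le: "\<forall>\<^sub>F d in sequentially. norm (sqnorm d (\<theta> d)) \<le> c * norm (real d)"
    by (rule landau_o.bigE)
  have "((\<lambda>d. 2 * stein_error_const B C \<sigma> / sqrt (real d)) \<longlongrightarrow> 0) sequentially"
    by (intro tendsto_divide_0[OF tendsto_const] filterlim_at_top_imp_at_infinity
        filterlim_compose[OF sqrt_at_top filterlim_real_sequentially])
  hence "\<forall>\<^sub>F d in sequentially. 2 * stein_error_const B C \<sigma> / sqrt (real d) < \<sigma>\<^sup>2 / (2 * (\<sigma>\<^sup>2 + c))"
    by (rule order_tendstoD) (use sigma_pos c in \<open>simp add: add_pos_pos\<close>)
  with theta_le eventually_ge_at_top[of 4] show ?thesis
  proof eventually_elim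
    case (elim d)
    have theta: "0 \<le> sqnorm d (\<theta> d)" "sqnorm d (\<theta> d) \<le> c * real d"
      using elim(1) by (auto simp: sqnorm_def sum_nonneg)
    have "stein_component (P d s) d (Y d s) (T d s) (\<theta> d) \<sigma> B C" if "s \<in> space (\<mu> d)" for s
      using that elim(2)
      by (intro stein_component.intro product_copies.intro stein_component_axioms.intro)
        (simp_all add: P_prob Y_meas mean_zero covariance indep stein stein_bound inv_moment)
    from risk_shrink_less_risk_identity[OF mu_prob this kernel_meas sigma_pos]
    show ?case using shrinkage_gain_pos[OF sigma_pos c elim(2) theta elim(3)] elim(2) by simp
  qed
qed

end
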